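(* For each $n\ge1$ let $X_n$ be a stationary and isotropic Poisson hyperplane process in $\mathbb{R}^n$ with intensity $\gamma_n$, let $Z_{0,n}$ be the zero cell of the induced tessellation, and for fixed $\delta>0$ let $Y_{n,\delta}$ be a uniformly distributed random point on the sphere of radius $\delta$ centered at the origin in $\mathbb{R}^n$, independent of $X_n$. Assume $\gamma_n\sim\rho n^\alpha$ as $n\to\infty$ for some $\rho>0$ and $\alpha\in\mathbb{R}$. Then $$\lim_{n\to\infty}\mathbb{P}(Y_{n,\delta}\in Z_{0,n})=\begin{cases}0,&\alpha>\tfrac12,\\ e^{-\sqrt{2/\pi}\,\rho\delta},&\alpha=\tfrac12,\\ 1,&\alpha<\tfrac12.\end{cases}$$
   Context: A stationary and isotropic Poisson hyperplane process of intensity $\gamma$ in $\mathbb{R}^n$ is the Poisson process on the space of affine hyperplanes $H(u,\tau)=\{x:\langle x,u\rangle=\tau\}$ with intensity measure $\Theta(A)=2\gamma\int_{S^{n-1}}\int_0^\infty 1\{H(u,\tau)\in A\}\,d\tau\,\sigma(du)$, $\sigma$ the normalized spherical Lebesgue measure. The zero cell $Z_{0,n}$ is the (closed) cell of the induced tessellation containing the origin. *)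

theory Defs
  imports "HOL-Probability.Probability" "HOL-Library.Landau_Symbols"
begin

text \<open>Euclidean n-space, with n varying, is represented by extensional functions
  on the index set {..<n}, carrying the product Lebesgue measure.\<close>

definition lebesgue_n :: "nat \<Rightarrow> (nat \<Rightarrow> real) measure" where
  "lebesgue_n n = PiM {..<n} (\<lambda>_. lborel)"

definition inner_n :: "nat \<Rightarrow> (nat \<Rightarrow> real) \<Rightarrow> (nat \<Rightarrow> real) \<Rightarrow> real" where
  "inner_n n x y = (\<Sum>i<n. x i * y i)"

definition norm_n :: "nat \<Rightarrow> (nat \<Rightarrow> real) \<Rightarrow> real" where
  "norm_n n x = sqrt (\<Sum>i<n. (x i)\<^sup>2)"

text \<open>Normalized spherical Lebesgue measure on the unit sphere of R^n (cone-measure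
  construction: radial projection of the uniform distribution on the punctured unit ball).\<close>

definition sph_measure :: "nat \<Rightarrow> (nat \<Rightarrow> real) measure" where
  "sph_measure n =
     distr (uniform_measure (lebesgue_n n)
              {x \<in> space (lebesgue_n n). 0 < norm_n n x \<and> norm_n n x \<le> 1})
           (lebesgue_n n) (\<lambda>x. restrict (\<lambda>i. x i / norm_n n x) {..<n})"

definition unif_sphere :: "nat \<Rightarrow> real \<Rightarrow> (nat \<Rightarrow> real) measure" where
  "unif_sphere n \<delta> = distr (sph_measure n) (lebesgue_n n) (\<lambda>u. restrict (\<lambda>i. \<delta> * u i) {..<n})"

text \<open>Hyperplanes H(u,tau) = {x. <x,u> = tau} are parametrised by pairs (u,tau).
  Intensity measure Theta(A) = 2 gamma int_S int_0^infty 1{(u,tau) in A} dtau sigma(du).\<close>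

definition hyp_intensity :: "nat \<Rightarrow> real \<Rightarrow> ((nat \<Rightarrow> real) \<times> real) measure" where
  "hyp_intensity n \<gamma> =
     density (sph_measure n \<Otimes>\<^sub>M lborel)
             (\<lambda>p. ennreal (2 * \<gamma>) * indicator {0..} (snd p))"

text \<open>A Poisson point process with intensity measure Theta, realised as a random
  (simple) set of points X on the probability space M.\<close>

definition poisson_process :: "'w measure \<Rightarrow> ('w \<Rightarrow> 'p set) \<Rightarrow> 'p measure \<Rightarrow> bool" where
  "poisson_process M X \<Theta> \<longleftrightarrow>
     prob_space M \<and>
     (\<forall>\<omega>\<in>space M. X \<omega> \<subseteq> space \<Theta>) \<and>
     (\<forall>A\<in>sets \<Theta>. emeasure \<Theta> A < \<infinity> \<longrightarrow>
        (\<forall>k::nat. {\<omega>\<in>space M. finite (X \<omega> \<inter> A) \<and> card (X \<omega> \<inter> A) = k} \<in> sets M \<and>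
           measure M {\<omega>\<in>space M. finite (X \<omega> \<inter> A) \<and> card (X \<omega> \<inter> A) = k}
             = exp (- measure \<Theta> A) * (measure \<Theta> A) ^ k / fact k)) \<and>
     (\<forall>(I::nat set) A. finite I \<longrightarrow> (\<forall>i\<in>I. A i \<in> sets \<Theta> \<and> emeasure \<Theta> (A i) < \<infinity>) \<longrightarrow>
        disjoint_family_on A I \<longrightarrow>
        prob_space.indep_vars M (\<lambda>_. count_space UNIV) (\<lambda>i \<omega>. card (X \<omega> \<inter> A i)) I)"

definition process_events :: "'w measure \<Rightarrow> ('w \<Rightarrow> 'p set) \<Rightarrow> 'p measure \<Rightarrow> 'w set set" where
  "process_events M X \<Theta> =
     {{\<omega>\<in>space M. finite (X \<omega> \<inter> A) \<and> card (X \<omega> \<inter> A) = k} | A k. A \<in> sets \<Theta>}"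

definition indep_of_process ::
  "'w measure \<Rightarrow> ('w \<Rightarrow> 'p set) \<Rightarrow> 'p measure \<Rightarrow> ('w \<Rightarrow> 'b) \<Rightarrow> 'b measure \<Rightarrow> bool" where
  "indep_of_process M X \<Theta> Y N \<longleftrightarrow>
     prob_space.indep_set M
       (sigma_sets (space M) {Y -` B \<inter> space M | B. B \<in> sets N})
       (sigma_sets (space M) (process_events M X \<Theta>))"

definition zero_cell :: "nat \<Rightarrow> ((nat \<Rightarrow> real) \<times> real) set \<Rightarrow> (nat \<Rightarrow> real) set" where
  "zero_cell n S = {x \<in> space (lebesgue_n n). \<forall>(u,\<tau>)\<in>S. inner_n n x u \<le> \<tau>}"

end

theory Submission
  imports Defs
begin

text \<open>
  In dimension \<open>n\<close>, the point \<open>Y\<close> lies in the zero cell iff no hyperplane \<open>H(u,\<tau>)\<close> of the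
  process separates it from the origin, that is, none has \<open>0 \<le> \<tau> < \<langle>Y,u\<rangle>\<close>. For fixed \<open>Y = y\<close>
  these hyperplanes form a set of intensity measure \<open>2 \<gamma> \<integral> \<langle>y,u\<rangle>\<^sup>+ d\<sigma>(u) = 2 \<gamma> |y| \<kappa>\<^sub>n\<close>, so
  independence suggests \<open>P(Y \<in> Z\<^sub>0) = exp (-2 \<gamma> \<delta> \<kappa>\<^sub>n)\<close>. Since only independence of
  \<open>\<sigma>\<close>-algebras is available, this is proved by partitioning the sphere into small grid cells,
  bounding the probability from both sides cell by cell, and letting the mesh tend to \<open>0\<close>.

  The constant \<open>\<kappa>\<^sub>n = \<Gamma>(n/2) / (2 \<surd>\<pi> \<Gamma>((n+1)/2))\<close> is obtained by integrating
  \<open>\<langle>y,x\<rangle>\<^sup>+\<close> against the density \<open>exp (-|x|\<^sup>2)\<close> once in polar coordinates and once as a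
  one-dimensional Gaussian. Log-convexity of the Gaussian moments gives \<open>\<surd>n \<kappa>\<^sub>n \<rightarrow> 1/\<surd>(2\<pi>)\<close>,
  hence \<open>P(Y \<in> Z\<^sub>0) = exp (-(\<surd>(2/\<pi>) \<rho> \<delta> + o(1)) n\<^sup>\<alpha>\<^sup>-\<^sup>1\<^sup>/\<^sup>2)\<close>.
\<close>

section \<open>Lebesgue measure on \<open>\<real>\<^sup>n\<close> and polar coordinates\<close>

text \<open>\<open>lebesgue_n\<close> with its definition unfolded, so that the measurability prover sees the
  product structure.\<close>

abbreviation lborel_n :: "nat \<Rightarrow> (nat \<Rightarrow> real) measure" where
  "lborel_n n \<equiv> PiM {..<n} (\<lambda>_. lborel)"

lemma lebesgue_n_eq: "lebesgue_n n = lborel_n n"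
  by (simp add: lebesgue_n_def)

lemma product_sigma_finite_lborel: "product_sigma_finite (\<lambda>_::'i. (lborel::real measure))"
  by (simp add: product_sigma_finite_def lborel.sigma_finite_measure_axioms)

lemma measurable_restrict_scale[measurable]:
  "(\<lambda>x. restrict (\<lambda>i. (c::real) * x i) I) \<in> measurable (PiM I (\<lambda>_. lborel)) (PiM I (\<lambda>_. lborel))"
  by (rule measurable_restrict) measurable

lemma borel_measurable_nn_integral_fun_upd:
  assumes f[measurable]: "f \<in> borel_measurable (PiM (insert j I) (\<lambda>_. (lborel::real measure)))"
  shows "(\<lambda>x. \<integral>\<^sup>+y. f (x(j:=y)) \<partial>lborel) \<in> borel_measurable (PiM I (\<lambda>_. lborel))"
proof -
  have "(\<lambda>(x,y). f (x(j:=y))) \<in> borel_measurable (PiM I (\<lambda>_. lborel) \<Otimes>\<^sub>M lborel)"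
    using measurable_comp[OF measurable_add_dim[of j I "\<lambda>_. lborel"] f]
    by (simp add: o_def case_prod_beta')
  then show ?thesis
    using lborel.borel_measurable_nn_integral[of "\<lambda>x y. f (x(j:=y))"] by simp
qed

lemma nn_integral_PiM_lborel_scale:
  fixes I :: "'i set"
  assumes "finite I" "c > 0" "f \<in> borel_measurable (PiM I (\<lambda>_. lborel))"
  shows "ennreal (c ^ card I) * (\<integral>\<^sup>+x. f (restrict (\<lambda>i. c * x i) I) \<partial>PiM I (\<lambda>_. lborel))
      = (\<integral>\<^sup>+x. f x \<partial>PiM I (\<lambda>_. lborel))"
  using assms(1,3)
proof (induction I arbitrary: f rule: finite_induct)
  case empty
  show ?case
    by (simp add: PiM_empty nn_integral_count_space_finite)
next
  case (insert j I)
  interpret product_sigma_finite "\<lambda>_::'i. (lborel::real measure)" by (rule product_sigma_finite_lborel)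
  note fm[measurable] = insert.prems
  define F where "F = (\<lambda>x. \<integral>\<^sup>+y. f (x(j:=y)) \<partial>lborel)"
  have Fm[measurable]: "F \<in> borel_measurable (PiM I (\<lambda>_. lborel))"
    unfolding F_def by (rule borel_measurable_nn_integral_fun_upd[OF fm])
  have "(\<integral>\<^sup>+x. f (restrict (\<lambda>i. c * x i) (insert j I)) \<partial>PiM (insert j I) (\<lambda>_. lborel))
     = (\<integral>\<^sup>+x. \<integral>\<^sup>+y. f ((restrict (\<lambda>i. c * x i) I)(j := c * y)) \<partial>lborel \<partial>PiM I (\<lambda>_. lborel))"
    apply (subst product_nn_integral_insert[OF insert(1,2)], measurable)
    apply (intro nn_integral_cong arg_cong[where f=f])
    using insert(2) by (auto simp: space_PiM PiE_def extensional_def restrict_def fun_eq_iff)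
  also have "\<dots> = (\<integral>\<^sup>+x. ennreal (1/c) * F (restrict (\<lambda>i. c * x i) I) \<partial>PiM I (\<lambda>_. lborel))"
  proof (intro nn_integral_cong)
    fix x :: "'i \<Rightarrow> real" assume x: "x \<in> space (PiM I (\<lambda>_. lborel))"
    have xm: "restrict (\<lambda>i. c * x i) I \<in> space (PiM I (\<lambda>_. lborel))"
      by (simp add: space_PiM)
    have gm: "(\<lambda>y. f ((restrict (\<lambda>i. c * x i) I)(j := y))) \<in> borel_measurable lborel"
      using measurable_comp[OF measurable_component_update[OF xm insert(2)] fm] by (simp add: o_def)
    have "F (restrict (\<lambda>i. c * x i) I)
        = ennreal \<bar>c\<bar> * (\<integral>\<^sup>+y. f ((restrict (\<lambda>i. c * x i) I)(j := 0 + c * y)) \<partial>lborel)"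
      unfolding F_def using gm assms(2) by (intro nn_integral_real_affine) auto
    moreover have "ennreal (1/c) * ennreal \<bar>c\<bar> = 1"
      using assms(2) by (simp add: ennreal_mult'[symmetric])
    ultimately show "(\<integral>\<^sup>+y. f ((restrict (\<lambda>i. c * x i) I)(j := c * y)) \<partial>lborel)
        = ennreal (1/c) * F (restrict (\<lambda>i. c * x i) I)"
      by (simp add: mult.assoc[symmetric])
  qed
  also have "\<dots> = ennreal (1/c) * (\<integral>\<^sup>+x. F (restrict (\<lambda>i. c * x i) I) \<partial>PiM I (\<lambda>_. lborel))"
    by (rule nn_integral_cmult) measurable
  finally have eq: "(\<integral>\<^sup>+x. f (restrict (\<lambda>i. c * x i) (insert j I)) \<partial>PiM (insert j I) (\<lambda>_. lborel)) =
      ennreal (1/c) * (\<integral>\<^sup>+x. F (restrict (\<lambda>i. c * x i) I) \<partial>PiM I (\<lambda>_. lborel))" .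
  have "ennreal (c ^ card (insert j I)) * ennreal (1/c) = ennreal (c ^ card I)"
    using insert assms(2) by (simp add: ennreal_mult'[symmetric])
  then have "ennreal (c ^ card (insert j I))
        * (\<integral>\<^sup>+x. f (restrict (\<lambda>i. c * x i) (insert j I)) \<partial>PiM (insert j I) (\<lambda>_. lborel))
      = ennreal (c ^ card I) * (\<integral>\<^sup>+x. F (restrict (\<lambda>i. c * x i) I) \<partial>PiM I (\<lambda>_. lborel))"
    unfolding eq by (simp add: mult.assoc[symmetric])
  also have "\<dots> = (\<integral>\<^sup>+x. F x \<partial>PiM I (\<lambda>_. lborel))"
    by (rule insert.IH[OF Fm])
  also have "\<dots> = (\<integral>\<^sup>+x. f x \<partial>PiM (insert j I) (\<lambda>_. lborel))"
    unfolding F_def by (rule product_nn_integral_insert[symmetric, OF insert(1,2) fm])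
  finally show ?case .
qed

lemma borel_measurable_norm_n[measurable]: "norm_n n \<in> borel_measurable (lborel_n n)"
  unfolding norm_n_def by measurable

lemma borel_measurable_inner_n[measurable]:
  "(\<lambda>x. inner_n n z x) \<in> borel_measurable (lborel_n n)"
  "(\<lambda>x. inner_n n x z) \<in> borel_measurable (lborel_n n)"
  unfolding inner_n_def by measurable

lemma norm_n_nonneg: "0 \<le> norm_n n x"
  by (simp add: norm_n_def sum_nonneg)

lemma norm_n_scale: "0 \<le> c \<Longrightarrow> norm_n n (restrict (\<lambda>i. c * x i) {..<n}) = c * norm_n n x"
proof -
  assume c: "0 \<le> c"
  have "(\<Sum>i<n. (restrict (\<lambda>i. c * x i) {..<n} i)\<^sup>2) = c\<^sup>2 * (\<Sum>i<n. (x i)\<^sup>2)"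
    by (simp add: sum_distrib_left power_mult_distrib)
  then show ?thesis
    using c unfolding norm_n_def by (simp only: real_sqrt_mult real_sqrt_abs abs_of_nonneg)
qed

lemma abs_le_norm_n: "i < n \<Longrightarrow> \<bar>x i\<bar> \<le> norm_n n x"
proof -
  assume "i < n"
  then have "(x i)\<^sup>2 \<le> (\<Sum>j<n. (x j)\<^sup>2)"
    by (intro member_le_sum) auto
  then show ?thesis
    unfolding norm_n_def by (metis real_sqrt_abs real_sqrt_le_mono)
qed

lemma norm_n_eq_0_iff:
  "x \<in> space (lborel_n n) \<Longrightarrow> norm_n n x = 0 \<longleftrightarrow> x = (\<lambda>i\<in>{..<n}. 0)"
  unfolding norm_n_def real_sqrt_eq_zero_cancel_iff
  by (subst sum_nonneg_eq_0_iff) (auto simp: space_PiM PiE_def extensional_def fun_eq_iff)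

lemma inner_n_diff_le:
  assumes "\<And>i. i < n \<Longrightarrow> \<bar>y i - z i\<bar> \<le> e" "norm_n n u = 1"
  shows "\<bar>inner_n n y u - inner_n n z u\<bar> \<le> real n * e"
proof -
  have "\<bar>inner_n n y u - inner_n n z u\<bar> = \<bar>\<Sum>i<n. (y i - z i) * u i\<bar>"
    unfolding inner_n_def by (simp add: sum_subtractf left_diff_distrib)
  also have "\<dots> \<le> (\<Sum>i<n. \<bar>(y i - z i) * u i\<bar>)"
    by (rule sum_abs)
  also have "\<dots> \<le> (\<Sum>i<n. e)"
  proof (rule sum_mono)
    fix i assume i: "i \<in> {..<n}"
    then have "\<bar>y i - z i\<bar> * \<bar>u i\<bar> \<le> e * 1"
      using assms abs_le_norm_n[of i n u] by (intro mult_mono) (auto intro: order_trans[OF abs_ge_zero])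
    then show "\<bar>(y i - z i) * u i\<bar> \<le> e"
      by (simp add: abs_mult)
  qed
  finally show ?thesis by simp
qed

lemma emeasure_norm_n_le_1: "emeasure (lborel_n n) {x\<in>space (lborel_n n). norm_n n x \<le> 1} \<le> 2 ^ n"
proof -
  interpret product_sigma_finite "\<lambda>_::nat. (lborel::real measure)" by (rule product_sigma_finite_lborel)
  have "{x\<in>space (lborel_n n). norm_n n x \<le> 1} \<subseteq> PiE {..<n} (\<lambda>_. {-1..1})"
  proof
    fix x assume x: "x \<in> {x\<in>space (lborel_n n). norm_n n x \<le> 1}"
    then have "\<bar>x i\<bar> \<le> 1" if "i < n" for i
      using abs_le_norm_n[OF that, of x] by simp
    then show "x \<in> PiE {..<n} (\<lambda>_. {-1..1})"
      using x by (simp add: space_PiM PiE_iff abs_le_iff)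
  qed
  then have "emeasure (lborel_n n) {x\<in>space (lborel_n n). norm_n n x \<le> 1}
      \<le> emeasure (lborel_n n) (PiE {..<n} (\<lambda>_. {-1..1}))"
    by (intro emeasure_mono) auto
  also have "\<dots> = 2 ^ n"
    by (subst emeasure_PiM) auto
  finally show ?thesis .
qed

lemma AE_norm_n_neq_0: "n \<ge> 1 \<Longrightarrow> AE x in lborel_n n. norm_n n x \<noteq> 0"
proof -
  assume n: "n \<ge> 1"
  interpret product_sigma_finite "\<lambda>_::nat. (lborel::real measure)" by (rule product_sigma_finite_lborel)
  have zero_set: "{x\<in>space (lborel_n n). norm_n n x = 0} = PiE {..<n} (\<lambda>_. {0})"
    using norm_n_eq_0_iff by (auto simp: space_PiM PiE_iff extensional_def fun_eq_iff)
  have "emeasure (lborel_n n) {x\<in>space (lborel_n n). norm_n n x = 0} = 0"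
    unfolding zero_set using n by (subst emeasure_PiM) auto
  then have "{x\<in>space (lborel_n n). norm_n n x = 0} \<in> null_sets (lborel_n n)"
    by (rule null_setsI) measurable
  then show ?thesis
    by (rule AE_I') auto
qed

lemma nn_integral_power_density:
  assumes "n \<ge> 1" "0 \<le> b"
  shows "(\<integral>\<^sup>+s. ennreal (real n * s^(n-1)) * indicator {0<..b} s \<partial>lborel) = ennreal (b^n)"
proof -
  have "(\<integral>\<^sup>+s. ennreal (real n * s^(n-1)) * indicator {0<..b} s \<partial>lborel)
      = (\<integral>\<^sup>+s. ennreal (real n * s^(n-1)) * indicator {0..b} s \<partial>lborel)"
    by (intro nn_integral_cong_AE, rule AE_mp[OF AE_lborel_singleton[of 0]])
       (auto simp: indicator_def)
  also have "\<dots> = ennreal (b^n - 0^n)"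
  proof (rule nn_integral_has_integral_lebesgue')
    have "((\<lambda>s. s^n) has_real_derivative real n * x^(n-1)) (at x within {0..b})" for x :: real
      by (auto intro!: derivative_eq_intros)
    then show "((\<lambda>s. real n * s^(n-1)) has_integral (b^n - 0^n)) {0..b}"
      using assms(2)
      by (intro fundamental_theorem_of_calculus) (auto simp: has_real_derivative_iff_has_vector_derivative)
  qed auto
  finally show ?thesis
    using assms(1) by (simp add: power_0_left)
qed

lemma nn_integral_homogeneous_shell:
  fixes \<psi> :: "(nat \<Rightarrow> real) \<Rightarrow> ennreal"
  assumes n: "n \<ge> 1"
    and \<psi>m[measurable]: "\<psi> \<in> borel_measurable (lborel_n n)"
    and hom: "\<And>x c. x \<in> space (lborel_n n) \<Longrightarrow> c > 0 \<Longrightarrow> \<psi> (restrict (\<lambda>i. c * x i) {..<n}) = \<psi> x"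
    and t: "t \<ge> 0"
  shows "(\<integral>\<^sup>+x. \<psi> x * indicator {0<..t} (norm_n n x) \<partial>lborel_n n) =
         ennreal (t^n) * (\<integral>\<^sup>+x. \<psi> x * indicator {0<..1} (norm_n n x) \<partial>lborel_n n)"
proof (cases "t = 0")
  case True
  then show ?thesis using n by simp
next
  case False
  with t have t: "t > 0" by simp
  have "(\<integral>\<^sup>+x. \<psi> x * indicator {0<..t} (norm_n n x) \<partial>lborel_n n)
      = ennreal (t ^ n) * (\<integral>\<^sup>+x. \<psi> (restrict (\<lambda>i. t * x i) {..<n})
          * indicator {0<..t} (norm_n n (restrict (\<lambda>i. t * x i) {..<n})) \<partial>lborel_n n)"
    using nn_integral_PiM_lborel_scale[OF _ t, of "{..<n}" "\<lambda>x. \<psi> x * indicator {0<..t} (norm_n n x)"]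
    by simp
  also have "(\<integral>\<^sup>+x. \<psi> (restrict (\<lambda>i. t * x i) {..<n})
          * indicator {0<..t} (norm_n n (restrict (\<lambda>i. t * x i) {..<n})) \<partial>lborel_n n)
      = (\<integral>\<^sup>+x. \<psi> x * indicator {0<..1} (norm_n n x) \<partial>lborel_n n)"
    using t by (intro nn_integral_cong)
      (auto simp: hom norm_n_scale indicator_def zero_less_mult_iff mult_le_cancel_left1)
  finally show ?thesis .
qed

lemma nn_integral_punctured_ball_finite:
  fixes \<psi> :: "(nat \<Rightarrow> real) \<Rightarrow> ennreal"
  assumes [measurable]: "\<psi> \<in> borel_measurable (lborel_n n)" and bnd: "\<And>x. \<psi> x \<le> ennreal B"
  shows "(\<integral>\<^sup>+x. \<psi> x * indicator {0<..1} (norm_n n x) \<partial>lborel_n n) < \<infinity>"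
proof -
  have "(\<integral>\<^sup>+x. \<psi> x * indicator {0<..1} (norm_n n x) \<partial>lborel_n n)
      \<le> (\<integral>\<^sup>+x. ennreal B * indicator {x\<in>space (lborel_n n). norm_n n x \<le> 1} x \<partial>lborel_n n)"
    using bnd by (intro nn_integral_mono) (auto simp: indicator_def)
  also have "\<dots> = ennreal B * emeasure (lborel_n n) {x\<in>space (lborel_n n). norm_n n x \<le> 1}"
    by (rule nn_integral_cmult_indicator) measurable
  also have "\<dots> \<le> ennreal B * 2^n"
    by (intro mult_left_mono emeasure_norm_n_le_1) auto
  also have "\<dots> < \<infinity>"
    by (simp add: ennreal_mult_less_top power_less_top_ennreal)
  finally show ?thesis .
qed

text \<open>It suffices to compare the two measures on the half-lines \<open>{..b}\<close>: both give them
  mass \<open>G (max b 0)\<^sup>n\<close>.\<close>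

lemma distr_norm_n_homogeneous_density:
  fixes \<psi> :: "(nat \<Rightarrow> real) \<Rightarrow> ennreal" and n :: nat
  defines "G \<equiv> \<integral>\<^sup>+x. \<psi> x * indicator {0<..1} (norm_n n x) \<partial>lborel_n n"
  assumes n: "n \<ge> 1"
    and \<psi>m[measurable]: "\<psi> \<in> borel_measurable (lborel_n n)"
    and hom: "\<And>x c. x \<in> space (lborel_n n) \<Longrightarrow> c > 0 \<Longrightarrow> \<psi> (restrict (\<lambda>i. c * x i) {..<n}) = \<psi> x"
    and fin: "G < \<infinity>"
  shows "distr (density (lborel_n n) (\<lambda>x. \<psi> x * indicator {0<..} (norm_n n x))) borel (norm_n n)
       = density lborel (\<lambda>s. G * ennreal (real n * s^(n-1)) * indicator {0<..} s)"
    (is "?\<nu> = ?\<mu>")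
proof (rule measure_eqI_generator_eq_countable[where E="range atMost" and \<Omega>=UNIV
      and A="range (\<lambda>i::nat. {..real i})"])
  have \<nu>_atMost: "emeasure ?\<nu> {..b} = ennreal ((max b 0)^n) * G" for b
  proof -
    have "emeasure ?\<nu> {..b}
        = emeasure (density (lborel_n n) (\<lambda>x. \<psi> x * indicator {0<..} (norm_n n x)))
            (norm_n n -` {..b} \<inter> space (lborel_n n))"
      by (subst emeasure_distr) auto
    also have "\<dots> = (\<integral>\<^sup>+x. \<psi> x * indicator {0<..} (norm_n n x)
        * indicator (norm_n n -` {..b} \<inter> space (lborel_n n)) x \<partial>lborel_n n)"
      by (rule emeasure_density) auto
    also have "\<dots> = (\<integral>\<^sup>+x. \<psi> x * indicator {0<..max b 0} (norm_n n x) \<partial>lborel_n n)"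
      by (intro nn_integral_cong) (auto simp: indicator_def)
    finally show ?thesis
      unfolding G_def using nn_integral_homogeneous_shell[OF n \<psi>m hom, of "max b 0"] by simp
  qed
  have \<mu>_atMost: "emeasure ?\<mu> {..b} = ennreal ((max b 0)^n) * G" for b
  proof -
    have "emeasure ?\<mu> {..b}
        = (\<integral>\<^sup>+s. G * (ennreal (real n * s^(n-1)) * indicator {0<..max b 0} s) \<partial>lborel)"
      by (subst emeasure_density) (auto intro!: nn_integral_cong simp: indicator_def)
    also have "\<dots> = G * ennreal ((max b 0)^n)"
      using nn_integral_power_density[OF n, of "max b 0"] by (simp add: nn_integral_cmult)
    finally show ?thesis by (simp add: mult.commute)
  qed
  show "Int_stable (range (atMost :: real \<Rightarrow> real set))"
    by (auto simp: Int_stable_def)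
  show "sets ?\<nu> = sigma_sets UNIV (range atMost)" "sets ?\<mu> = sigma_sets UNIV (range atMost)"
    by (simp_all add: borel_eq_atMost sets_measure_of)
  show "\<Union> (range (\<lambda>i::nat. {..real i})) = UNIV"
    by (auto simp: real_arch_simple)
  show "emeasure ?\<nu> X \<noteq> \<infinity>" if "X \<in> range (\<lambda>i::nat. {..real i})" for X
    using that fin by (auto simp: \<nu>_atMost ennreal_mult_eq_top_iff)
  show "emeasure ?\<nu> X = emeasure ?\<mu> X" if "X \<in> range atMost" for X
    using that \<nu>_atMost \<mu>_atMost by auto
qed (simp_all add: image_subset_iff)

lemma nn_integral_polar_homogeneous:
  fixes \<psi> :: "(nat \<Rightarrow> real) \<Rightarrow> ennreal" and w :: "real \<Rightarrow> ennreal"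
  assumes n: "n \<ge> 1"
    and \<psi>m[measurable]: "\<psi> \<in> borel_measurable (lborel_n n)"
    and hom: "\<And>x c. x \<in> space (lborel_n n) \<Longrightarrow> c > 0 \<Longrightarrow> \<psi> (restrict (\<lambda>i. c * x i) {..<n}) = \<psi> x"
    and bnd: "\<And>x. \<psi> x \<le> ennreal B"
    and wm[measurable]: "w \<in> borel_measurable borel"
  shows "(\<integral>\<^sup>+x. \<psi> x * w (norm_n n x) * indicator {0<..} (norm_n n x) \<partial>lborel_n n) =
    (\<integral>\<^sup>+x. \<psi> x * indicator {0<..1} (norm_n n x) \<partial>lborel_n n) *
    (\<integral>\<^sup>+s. w s * ennreal (real n * s^(n-1)) * indicator {0<..} s \<partial>lborel)"
proof -
  let ?D = "density (lborel_n n) (\<lambda>x. \<psi> x * indicator {0<..} (norm_n n x))"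
  let ?G = "\<integral>\<^sup>+x. \<psi> x * indicator {0<..1} (norm_n n x) \<partial>lborel_n n"
  have "(\<integral>\<^sup>+x. \<psi> x * w (norm_n n x) * indicator {0<..} (norm_n n x) \<partial>lborel_n n)
      = (\<integral>\<^sup>+s. w s \<partial>distr ?D borel (norm_n n))"
    by (subst nn_integral_distr) (auto simp: nn_integral_density ac_simps)
  also have "\<dots> = (\<integral>\<^sup>+s. w s \<partial>density lborel (\<lambda>s. ?G * ennreal (real n * s^(n-1)) * indicator {0<..} s))"
    using nn_integral_punctured_ball_finite[OF \<psi>m bnd]
    by (simp add: distr_norm_n_homogeneous_density[OF n \<psi>m hom])
  also have "\<dots> = (\<integral>\<^sup>+s. ?G * (w s * ennreal (real n * s^(n-1)) * indicator {0<..} s) \<partial>lborel)"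
    by (subst nn_integral_density) (auto intro!: nn_integral_cong simp: ac_simps)
  also have "\<dots> = ?G * (\<integral>\<^sup>+s. w s * ennreal (real n * s^(n-1)) * indicator {0<..} s \<partial>lborel)"
    by (rule nn_integral_cmult) auto
  finally show ?thesis .
qed

section \<open>Gaussian moments and Gaussian vectors\<close>

text \<open>\<open>gauss_moment k = \<Gamma>((k+1)/2) / 2\<close>; only its recursion and log-convexity are used.\<close>

definition gauss_moment :: "nat \<Rightarrow> real" where
  "gauss_moment k = (\<integral>x. indicator {0..} x *\<^sub>R (exp (- x\<^sup>2) * x ^ k) \<partial>lborel)"

lemma has_bochner_integral_gauss_moment:
  "has_bochner_integral lborel (\<lambda>x::real. indicator {0..} x *\<^sub>R (exp (- x\<^sup>2) * x ^ k)) (gauss_moment k)"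
proof (cases "even k")
  case True
  then obtain j where k: "k = 2 * j" by (auto elim: evenE)
  show ?thesis using gaussian_moment_even_pos[of j] unfolding k gauss_moment_def
    by (simp add: has_bochner_integral_iff)
next
  case False
  then obtain j where k: "k = 2 * j + 1" by (auto elim: oddE)
  show ?thesis using gaussian_moment_odd_pos[of j] unfolding k gauss_moment_def
    by (simp add: has_bochner_integral_iff)
qed

lemma gauss_moment_even:
  "gauss_moment (2 * j) = (sqrt pi / 2) * (fact (2 * j) / (2 ^ (2 * j) * fact j))"
  unfolding gauss_moment_def by (rule has_bochner_integral_integral_eq[OF gaussian_moment_even_pos[of j]])

lemma gauss_moment_odd: "gauss_moment (2 * j + 1) = fact j / 2"
  unfolding gauss_moment_def by (rule has_bochner_integral_integral_eq[OF gaussian_moment_odd_pos[of j]])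

lemma gauss_moment_pos: "gauss_moment k > 0"
proof (cases "even k")
  case True
  then obtain j where k: "k = 2 * j" by (auto elim: evenE)
  show ?thesis unfolding k gauss_moment_even by simp
next
  case False
  then obtain j where k: "k = 2 * j + 1" by (auto elim: oddE)
  show ?thesis unfolding k gauss_moment_odd by simp
qed

lemma gauss_moment_Suc_Suc: "gauss_moment (k + 2) = (real k + 1) / 2 * gauss_moment k"
proof (cases "even k")
  case True
  then obtain j where k: "k = 2 * j" by (auto elim: evenE)
  have e: "k + 2 = 2 * (j + 1)" using k by simp
  have f1: "fact (2 * (j + 1)) = (2 * real j + 2) * (2 * real j + 1) * (fact (2 * j) :: real)"
    by (simp add: fact_Suc algebra_simps)
  have f2: "fact (j + 1) = (real j + 1) * (fact j :: real)"
    by (simp add: fact_Suc algebra_simps)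
  have p: "(2::real) ^ (2 * (j + 1)) = 4 * 2 ^ (2 * j)" by (simp add: power_add)
  have "fact (2 * (j + 1)) / (2 ^ (2 * (j + 1)) * fact (j + 1))
      = ((2 * real j + 2) * (2 * real j + 1)) / (4 * (real j + 1))
        * ((fact (2 * j) :: real) / (2 ^ (2 * j) * fact j))"
    unfolding f1 f2 p by (simp add: field_simps)
  also have "((2 * real j + 2) * (2 * real j + 1)) / (4 * (real j + 1)) = (real k + 1) / 2"
    unfolding k by (simp add: field_simps)
  finally show ?thesis unfolding e gauss_moment_even unfolding k gauss_moment_even by (simp add: k)
next
  case False
  then obtain j where k: "k = 2 * j + 1" by (auto elim: oddE)
  have e: "k + 2 = 2 * (j + 1) + 1" using k by simp
  show ?thesis unfolding e gauss_moment_odd unfolding k gauss_moment_odd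
    by (simp add: fact_Suc field_simps)
qed

lemma gauss_moment_log_convex: "(gauss_moment (k + 1))\<^sup>2 \<le> gauss_moment k * gauss_moment (k + 2)"
proof -
  define l where "l = gauss_moment (k + 1) / gauss_moment k"
  let ?f = "\<lambda>j x::real. indicator {0..} x *\<^sub>R (exp (- x\<^sup>2) * x ^ j)"
  have "has_bochner_integral lborel (\<lambda>x. ?f (k + 2) x - 2 * l * ?f (k + 1) x + l\<^sup>2 * ?f k x)
          (gauss_moment (k + 2) - 2 * l * gauss_moment (k + 1) + l\<^sup>2 * gauss_moment k)"
    by (intro has_bochner_integral_add has_bochner_integral_diff has_bochner_integral_mult_right
        has_bochner_integral_gauss_moment)
  moreover have "(\<lambda>x. ?f (k + 2) x - 2 * l * ?f (k + 1) x + l\<^sup>2 * ?f k x)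
      = (\<lambda>x. indicator {0..} x * (exp (- x\<^sup>2) * x ^ k * (x - l)\<^sup>2))"
    by (auto simp: fun_eq_iff power2_eq_square algebra_simps indicator_def)
  ultimately have hb:
    "has_bochner_integral lborel (\<lambda>x. indicator {0..} x * (exp (- x\<^sup>2) * x ^ k * (x - l)\<^sup>2))
       (gauss_moment (k + 2) - 2 * l * gauss_moment (k + 1) + l\<^sup>2 * gauss_moment k)"
    by simp
  have "0 \<le> gauss_moment (k + 2) - 2 * l * gauss_moment (k + 1) + l\<^sup>2 * gauss_moment k"
    unfolding has_bochner_integral_integral_eq[OF hb, symmetric]
    by (intro integral_nonneg_AE AE_I2) (auto simp: indicator_def)
  then show ?thesis
    using gauss_moment_pos[of k] unfolding l_def by (simp add: field_simps power2_eq_square)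
qed

lemma gauss_moment_ratio_bounds:
  assumes "k \<ge> 1"
  shows "2 / (real k + 1) \<le> (gauss_moment k / gauss_moment (k + 1))\<^sup>2"
    and "(gauss_moment k / gauss_moment (k + 1))\<^sup>2 \<le> 2 / real k"
proof -
  define r where "r j = gauss_moment j / gauss_moment (j + 1)" for j
  have rpos: "r j > 0" for j unfolding r_def using gauss_moment_pos by simp
  have prod: "r j * r (j + 1) = 2 / (real j + 1)" for j
  proof -
    have "r j * r (j + 1) = gauss_moment j / gauss_moment (j + 2)"
      unfolding r_def using gauss_moment_pos[of "j+1"] by (simp add: add.assoc)
    also have "\<dots> = 2 / (real j + 1)"
    proof -
      have "a / (c / 2 * a) = 2 / c" if "a > 0" "c > 0" for a c :: real
        using that by (simp add: field_simps)
      then show ?thesis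
        unfolding gauss_moment_Suc_Suc using gauss_moment_pos[of j] by simp
    qed
    finally show ?thesis .
  qed
  have dec: "r (j + 1) \<le> r j" for j
    unfolding r_def using gauss_moment_log_convex[of j] gauss_moment_pos[of j]
      gauss_moment_pos[of "j+1"] gauss_moment_pos[of "j+2"]
    by (simp add: field_simps power2_eq_square add.assoc)
  have "2 / (real k + 1) = r k * r (k + 1)" using prod by simp
  also have "\<dots> \<le> r k * r k" using dec[of k] rpos[of k] by (intro mult_left_mono) auto
  finally show "2 / (real k + 1) \<le> (gauss_moment k / gauss_moment (k + 1))\<^sup>2"
    unfolding r_def by (simp add: power2_eq_square)
  obtain j where k: "k = j + 1" using assms by (metis add.commute le_Suc_ex)
  have "r k * r k \<le> r j * r k" using dec[of j] rpos[of k] k by (intro mult_right_mono) auto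
  also have "\<dots> = 2 / real k" using prod[of j] k by simp
  finally show "(gauss_moment k / gauss_moment (k + 1))\<^sup>2 \<le> 2 / real k"
    unfolding r_def by (simp add: power2_eq_square)
qed

lemma nn_integral_gauss_moment:
  "(\<integral>\<^sup>+s. ennreal (exp (- s\<^sup>2) * s ^ k) * indicator {0<..} s \<partial>lborel) = ennreal (gauss_moment k)"
proof -
  have "(\<integral>\<^sup>+s. ennreal (exp (- s\<^sup>2) * s ^ k) * indicator {0<..} s \<partial>lborel)
      = (\<integral>\<^sup>+s. ennreal (indicator {0..} s *\<^sub>R (exp (- s\<^sup>2) * s ^ k)) \<partial>lborel)"
    by (intro nn_integral_cong_AE, rule AE_mp[OF AE_lborel_singleton[of 0]])
       (auto simp: indicator_def)
  also have "\<dots> = ennreal (gauss_moment k)"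
    using has_bochner_integral_gauss_moment[of k] unfolding gauss_moment_def
    by (subst nn_integral_eq_integral) (auto simp: has_bochner_integral_iff indicator_def)
  finally show ?thesis .
qed

lemma nn_integral_normal_density_pos_part:
  assumes s: "0 < s"
  shows "(\<integral>\<^sup>+z. ennreal (normal_density 0 s z) * ennreal z \<partial>lborel) = ennreal (s / sqrt (2 * pi))"
proof -
  have "has_bochner_integral lborel
      (\<lambda>x. (normal_density 0 s x * \<bar>x - 0\<bar>^(2 * 0 + 1) + normal_density 0 s x * x) / 2)
      ((2^0 * s^(2 * 0 + 1) * fact 0 * sqrt (2 / pi) + 0) / 2)"
    by (intro has_bochner_integral_divide_zero has_bochner_integral_add
        normal_moment_abs_odd normal_moment_nz_1 s)
  then have hb: "has_bochner_integral lborel (\<lambda>x. normal_density 0 s x * max x 0) (s * sqrt (2 / pi) / 2)"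
    by (rule has_bochner_integral_cong[THEN iffD1, rotated -1]) (auto simp: max_def field_simps)
  have "(\<integral>\<^sup>+z. ennreal (normal_density 0 s z) * ennreal z \<partial>lborel)
      = (\<integral>\<^sup>+z. ennreal (normal_density 0 s z * max z 0) \<partial>lborel)"
    by (intro nn_integral_cong) (auto simp: ennreal_mult' max_def ennreal_neg)
  also have "\<dots> = ennreal (s * sqrt (2 / pi) / 2)"
    using hb by (subst nn_integral_eq_integral)
      (auto simp: has_bochner_integral_iff has_bochner_integral_integral_eq[OF hb])
  also have "s * sqrt (2 / pi) / 2 = s / sqrt (2 * pi)"
    by (simp add: real_sqrt_divide real_sqrt_mult field_simps)
  finally show ?thesis .
qed

text \<open>Each coordinate has variance \<open>1/2\<close>, so that \<open>gauss_n n\<close> has density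
  \<open>exp (-|x|\<^sup>2) / \<pi>\<^sup>n\<^sup>/\<^sup>2\<close>.\<close>

definition gauss_n :: "nat \<Rightarrow> (nat \<Rightarrow> real) measure" where
  "gauss_n n = PiM {..<n} (\<lambda>_. density lborel (\<lambda>x. ennreal (normal_density 0 (1 / sqrt 2) x)))"

lemma normal_density_inv_sqrt2: "normal_density 0 (1 / sqrt 2) x = exp (- x\<^sup>2) / sqrt pi"
  by (simp add: normal_density_def power_divide)

lemma nn_integral_PiM_density:
  fixes I :: "'i set" and \<phi> :: "real \<Rightarrow> real"
  assumes fin: "finite I" and \<phi>m[measurable]: "\<phi> \<in> borel_measurable borel"
    and sf: "sigma_finite_measure (density lborel \<phi>)"
    and "f \<in> borel_measurable (PiM I (\<lambda>_. lborel))"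
  shows "(\<integral>\<^sup>+x. f x \<partial>PiM I (\<lambda>_. density lborel \<phi>))
    = (\<integral>\<^sup>+x. f x * (\<Prod>i\<in>I. ennreal (\<phi> (x i))) \<partial>PiM I (\<lambda>_. lborel))"
  using fin assms(4)
proof (induction I arbitrary: f rule: finite_induct)
  case empty
  show ?case by (simp add: PiM_empty nn_integral_count_space_finite)
next
  case (insert j I)
  interpret L: product_sigma_finite "\<lambda>_::'i. (lborel::real measure)" by (rule product_sigma_finite_lborel)
  interpret N: product_sigma_finite "\<lambda>_::'i. density lborel \<phi>"
    using sf by (simp add: product_sigma_finite_def)
  have sets_eq: "sets (PiM J (\<lambda>_::'i. density lborel \<phi>)) = sets (PiM J (\<lambda>_. lborel))" for J
    by (intro sets_PiM_cong) auto
  note fm[measurable] = insert.prems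
  have fmN: "f \<in> borel_measurable (PiM (insert j I) (\<lambda>_. density lborel \<phi>))"
    using fm measurable_cong_sets[OF sets_eq refl] by blast
  define F where "F = (\<lambda>x. \<integral>\<^sup>+y. ennreal (\<phi> y) * f (x(j:=y)) \<partial>lborel)"
  have Fm[measurable]: "F \<in> borel_measurable (PiM I (\<lambda>_. lborel))"
  proof -
    have "(\<lambda>x. ennreal (\<phi> (x j)) * f x) \<in> borel_measurable (PiM (insert j I) (\<lambda>_. lborel))"
      by measurable
    from borel_measurable_nn_integral_fun_upd[OF this] show ?thesis unfolding F_def by simp
  qed
  have "(\<integral>\<^sup>+x. f x \<partial>PiM (insert j I) (\<lambda>_. density lborel \<phi>))
      = (\<integral>\<^sup>+x. \<integral>\<^sup>+y. f (x(j:=y)) \<partial>density lborel \<phi> \<partial>PiM I (\<lambda>_. density lborel \<phi>))"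
    by (rule N.product_nn_integral_insert[OF insert(1,2) fmN])
  also have "\<dots> = (\<integral>\<^sup>+x. F x \<partial>PiM I (\<lambda>_. density lborel \<phi>))"
  proof (intro nn_integral_cong)
    fix x assume x: "x \<in> space (PiM I (\<lambda>_. density lborel \<phi>))"
    then have x': "x \<in> space (PiM I (\<lambda>_. lborel))" by (simp add: space_PiM)
    have gm: "(\<lambda>y. f (x(j := y))) \<in> borel_measurable lborel"
      using measurable_comp[OF measurable_component_update[OF x' insert(2)] fm] by (simp add: o_def)
    show "(\<integral>\<^sup>+y. f (x(j:=y)) \<partial>density lborel \<phi>) = F x"
      unfolding F_def using gm by (subst nn_integral_density) auto
  qed
  also have "\<dots> = (\<integral>\<^sup>+x. F x * (\<Prod>i\<in>I. ennreal (\<phi> (x i))) \<partial>PiM I (\<lambda>_. lborel))"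
    by (rule insert.IH[OF Fm])
  also have "\<dots> = (\<integral>\<^sup>+x. \<integral>\<^sup>+y. (\<lambda>x. f x * (\<Prod>i\<in>insert j I. ennreal (\<phi> (x i)))) (x(j:=y)) \<partial>lborel \<partial>PiM I (\<lambda>_. lborel))"
  proof (intro nn_integral_cong)
    fix x :: "'i \<Rightarrow> real" assume x: "x \<in> space (PiM I (\<lambda>_. lborel))"
    have "F x * (\<Prod>i\<in>I. ennreal (\<phi> (x i))) = (\<integral>\<^sup>+y. ennreal (\<phi> y) * f (x(j:=y)) * (\<Prod>i\<in>I. ennreal (\<phi> (x i))) \<partial>lborel)"
      unfolding F_def
      using measurable_comp[OF measurable_component_update[OF x insert(2)] fm]
      by (subst nn_integral_multc) (auto simp: o_def)
    also have "\<dots> = (\<integral>\<^sup>+y. (\<lambda>x. f x * (\<Prod>i\<in>insert j I. ennreal (\<phi> (x i)))) (x(j:=y)) \<partial>lborel)"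
    proof (intro nn_integral_cong)
      fix y
      have "(\<Prod>i\<in>I. ennreal (\<phi> ((x(j:=y)) i))) = (\<Prod>i\<in>I. ennreal (\<phi> (x i)))"
        using insert(2) by (intro prod.cong) auto
      then show "ennreal (\<phi> y) * f (x(j:=y)) * (\<Prod>i\<in>I. ennreal (\<phi> (x i))) = f (x(j:=y)) * (\<Prod>i\<in>insert j I. ennreal (\<phi> ((x(j:=y)) i)))"
        using insert(1,2) by (simp add: ac_simps)
    qed
    finally show "F x * (\<Prod>i\<in>I. ennreal (\<phi> (x i))) = (\<integral>\<^sup>+y. (\<lambda>x. f x * (\<Prod>i\<in>insert j I. ennreal (\<phi> (x i)))) (x(j:=y)) \<partial>lborel)" .
  qed
  also have "\<dots> = (\<integral>\<^sup>+x. f x * (\<Prod>i\<in>insert j I. ennreal (\<phi> (x i))) \<partial>PiM (insert j I) (\<lambda>_. lborel))"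
    by (rule L.product_nn_integral_insert[symmetric, OF insert(1,2)]) measurable
  finally show ?case .
qed

lemma nn_integral_exp_neg_norm_n_sq:
  assumes [measurable]: "f \<in> borel_measurable (lborel_n n)"
  shows "(\<integral>\<^sup>+x. f x * ennreal (exp (- (norm_n n x)\<^sup>2)) \<partial>lborel_n n)
    = ennreal (sqrt pi ^ n) * (\<integral>\<^sup>+x. f x \<partial>gauss_n n)"
proof -
  interpret N: prob_space "density lborel (\<lambda>x. ennreal (normal_density 0 (1 / sqrt 2) x))"
    by (rule prob_space_normal_density) simp
  have "(\<integral>\<^sup>+x. f x \<partial>gauss_n n)
      = (\<integral>\<^sup>+x. f x * (\<Prod>i\<in>{..<n}. ennreal (normal_density 0 (1 / sqrt 2) (x i))) \<partial>lborel_n n)"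
    unfolding gauss_n_def
    by (rule nn_integral_PiM_density[OF _ _ N.sigma_finite_measure_axioms assms]) auto
  also have "\<dots> = (\<integral>\<^sup>+x. ennreal ((1 / sqrt pi)^n) * (f x * ennreal (exp (- (norm_n n x)\<^sup>2))) \<partial>lborel_n n)"
  proof (intro nn_integral_cong)
    fix x :: "nat \<Rightarrow> real"
    have "(\<Prod>i\<in>{..<n}. exp (- (x i)\<^sup>2) / sqrt pi) = (1 / sqrt pi)^n * exp (- (\<Sum>i<n. (x i)\<^sup>2))"
      by (simp add: prod_dividef exp_sum[symmetric] sum_negf power_one_over field_simps)
    moreover have "(\<Sum>i<n. (x i)\<^sup>2) = (norm_n n x)\<^sup>2"
      unfolding norm_n_def by (simp add: sum_nonneg)
    ultimately show "f x * (\<Prod>i\<in>{..<n}. ennreal (normal_density 0 (1 / sqrt 2) (x i)))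
        = ennreal ((1 / sqrt pi)^n) * (f x * ennreal (exp (- (norm_n n x)\<^sup>2)))"
      by (simp add: prod_ennreal normal_density_inv_sqrt2 ennreal_mult' ac_simps)
  qed
  also have "\<dots> = ennreal ((1 / sqrt pi)^n) * (\<integral>\<^sup>+x. f x * ennreal (exp (- (norm_n n x)\<^sup>2)) \<partial>lborel_n n)"
    by (rule nn_integral_cmult) measurable
  finally have "ennreal (sqrt pi ^ n) * (\<integral>\<^sup>+x. f x \<partial>gauss_n n)
      = ennreal (sqrt pi ^ n * (1 / sqrt pi)^n) * (\<integral>\<^sup>+x. f x * ennreal (exp (- (norm_n n x)\<^sup>2)) \<partial>lborel_n n)"
    by (simp add: ennreal_mult' mult.assoc)
  then show ?thesis
    by (simp add: power_one_over power_divide)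
qed

lemma indep_vars_PiM_components:
  assumes N: "prob_space N" and I: "finite I" "I \<noteq> {}"
  shows "prob_space.indep_vars (PiM I (\<lambda>_. N)) (\<lambda>_. N) (\<lambda>i x. x i) I"
proof -
  interpret P: prob_space "PiM I (\<lambda>_. N)"
    using N by (rule prob_space_PiM)
  have "distr (PiM I (\<lambda>_. N)) (PiM I (\<lambda>_. N)) (\<lambda>x. \<lambda>i\<in>I. x i) = distr (PiM I (\<lambda>_. N)) (PiM I (\<lambda>_. N)) (\<lambda>x. x)"
    by (rule distr_cong) (auto simp: space_PiM PiE_def extensional_restrict)
  also have "\<dots> = PiM I (\<lambda>_. N)"
    by (rule distr_id)
  also have "\<dots> = PiM I (\<lambda>i. distr (PiM I (\<lambda>_. N)) N (\<lambda>x. x i))"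
  proof (rule PiM_cong)
    show "N = distr (PiM I (\<lambda>_. N)) N (\<lambda>x. x i)" if "i \<in> I" for i
      using distr_PiM_component[of I "\<lambda>_. N" i] N that by simp
  qed simp
  finally show ?thesis
    using I by (subst P.indep_vars_iff_distr_eq_PiM') auto
qed

lemma distributed_inner_n_gauss_n:
  assumes n: "n \<ge> 1" and y: "norm_n n y > 0"
  shows "distributed (gauss_n n) lborel (inner_n n y) (normal_density 0 (norm_n n y / sqrt 2))"
proof -
  define s :: real where "s = 1 / sqrt 2"
  have s: "s > 0" unfolding s_def by simp
  define N where "N = density lborel (\<lambda>x. ennreal (normal_density 0 s x))"
  have N: "prob_space N" unfolding N_def by (rule prob_space_normal_density) (rule s)
  have gauss_N: "gauss_n n = PiM {..<n} (\<lambda>_. N)" unfolding gauss_n_def N_def s_def ..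
  interpret P: prob_space "gauss_n n"
    unfolding gauss_N using N by (rule prob_space_PiM)
  have sets_N: "sets N = sets borel" unfolding N_def by simp
  define J where "J = {i\<in>{..<n}. y i \<noteq> 0}"
  have J: "finite J" "J \<noteq> {}"
    using y unfolding J_def norm_n_def by (fastforce intro!: sum.neutral)+
  have "P.indep_vars (\<lambda>_. N) (\<lambda>i x. x i) {..<n}"
    unfolding gauss_N using n by (intro indep_vars_PiM_components N) (auto simp: lessThan_empty_iff)
  then have "P.indep_vars (\<lambda>_. borel) (\<lambda>i x. y i * x i) J"
    by (rule P.indep_vars_compose2[OF P.indep_vars_subset]) (auto simp: J_def measurable_cong_sets[OF sets_N refl])
  moreover have "distributed (gauss_n n) lborel (\<lambda>x. y i * x i) (normal_density 0 (\<bar>y i\<bar> * s))" if "i \<in> J" for i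
  proof -
    have i: "i < n" "y i \<noteq> 0" using that unfolding J_def by auto
    have "distr (gauss_n n) lborel (\<lambda>x. x i) = distr (gauss_n n) N (\<lambda>x. x i)"
      by (rule distr_cong) (auto simp: sets_N)
    also have "\<dots> = N"
      unfolding gauss_N using N i by (intro distr_PiM_component) auto
    finally have "distributed (gauss_n n) lborel (\<lambda>x. x i) (normal_density 0 s)"
      using i unfolding distributed_def gauss_N N_def
      by (auto simp: measurable_cong_sets[OF refl sets_N[unfolded N_def]])
    from P.normal_density_affine[OF this s i(2), of 0] show ?thesis by simp
  qed
  ultimately have "distributed (gauss_n n) lborel (\<lambda>x. \<Sum>i\<in>J. y i * x i)
      (normal_density (\<Sum>i\<in>J. 0) (sqrt (\<Sum>i\<in>J. (\<bar>y i\<bar> * s)\<^sup>2)))"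
    using J s by (intro P.sum_indep_normal) (auto simp: J_def)
  moreover have "sqrt (\<Sum>i\<in>J. (\<bar>y i\<bar> * s)\<^sup>2) = norm_n n y / sqrt 2"
  proof -
    have "(\<Sum>i\<in>J. (\<bar>y i\<bar> * s)\<^sup>2) = (\<Sum>i\<in>J. s\<^sup>2 * (y i)\<^sup>2)"
      by (simp add: power_mult_distrib mult.commute)
    also have "\<dots> = (\<Sum>i<n. s\<^sup>2 * (y i)\<^sup>2)"
      unfolding J_def by (rule sum.mono_neutral_left) auto
    finally have "(\<Sum>i\<in>J. (\<bar>y i\<bar> * s)\<^sup>2) = s\<^sup>2 * (\<Sum>i<n. (y i)\<^sup>2)"
      by (simp add: sum_distrib_left)
    then show ?thesis
      unfolding norm_n_def s_def by (simp add: real_sqrt_mult real_sqrt_divide)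
  qed
  moreover have "inner_n n y = (\<lambda>x. \<Sum>i\<in>J. y i * x i)"
    unfolding inner_n_def J_def by (intro ext sum.mono_neutral_right) auto
  ultimately show ?thesis by simp
qed

lemma nn_integral_inner_n_gauss_n:
  assumes n: "n \<ge> 1"
  shows "(\<integral>\<^sup>+x. ennreal (inner_n n y x) \<partial>gauss_n n) = ennreal (norm_n n y / (2 * sqrt pi))"
proof (cases "norm_n n y = 0")
  case True
  then have "\<forall>i<n. y i = 0"
    using abs_le_norm_n[of _ n y] by fastforce
  then have "inner_n n y x = 0" for x
    by (simp add: inner_n_def)
  then show ?thesis using True by simp
next
  case False
  then have y: "norm_n n y > 0" using norm_n_nonneg[of n y] by simp
  have "(\<integral>\<^sup>+x. ennreal (inner_n n y x) \<partial>gauss_n n)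
      = (\<integral>\<^sup>+z. ennreal (normal_density 0 (norm_n n y / sqrt 2) z) * ennreal z \<partial>lborel)"
    by (rule distributed_nn_integral[OF distributed_inner_n_gauss_n[OF n y], symmetric]) auto
  also have "\<dots> = ennreal (norm_n n y / (2 * sqrt pi))"
    using y by (subst nn_integral_normal_density_pos_part) (auto simp: real_sqrt_mult field_simps)
  finally show ?thesis .
qed

section \<open>The uniform distribution on the sphere\<close>

definition punctured_ball :: "nat \<Rightarrow> (nat \<Rightarrow> real) set" where
  "punctured_ball n = {x \<in> space (lborel_n n). 0 < norm_n n x \<and> norm_n n x \<le> 1}"

definition radial_proj :: "nat \<Rightarrow> (nat \<Rightarrow> real) \<Rightarrow> (nat \<Rightarrow> real)" where
  "radial_proj n x = restrict (\<lambda>i. x i / norm_n n x) {..<n}"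

lemma sph_measure_eq:
  "sph_measure n = distr (uniform_measure (lborel_n n) (punctured_ball n)) (lborel_n n) (radial_proj n)"
  unfolding sph_measure_def punctured_ball_def radial_proj_def lebesgue_n_eq ..

lemma measurable_radial_proj[measurable]: "radial_proj n \<in> measurable (lborel_n n) (lborel_n n)"
  unfolding radial_proj_def by (rule measurable_restrict) measurable

lemma sets_punctured_ball[measurable]: "punctured_ball n \<in> sets (lborel_n n)"
  unfolding punctured_ball_def by measurable

lemma radial_proj_scale: "c > 0 \<Longrightarrow> radial_proj n (restrict (\<lambda>i. c * x i) {..<n}) = radial_proj n x"
  by (auto simp: radial_proj_def norm_n_scale fun_eq_iff)

lemma abs_radial_proj_le: "i < n \<Longrightarrow> \<bar>radial_proj n x i\<bar> \<le> 1"
proof (cases "i < n \<and> norm_n n x > 0")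
  case True
  then have "\<bar>x i\<bar> \<le> norm_n n x" using abs_le_norm_n by blast
  then have "\<bar>x i\<bar> / norm_n n x \<le> 1" using True by (simp add: divide_le_eq_1_pos)
  then show ?thesis using True unfolding radial_proj_def by (simp add: abs_divide)
next
  case False
  assume i: "i < n"
  then have "norm_n n x = 0" using False norm_n_nonneg[of n x] by auto
  then show ?thesis unfolding radial_proj_def using i by auto
qed

lemma inner_n_radial_proj_le: "inner_n n y (radial_proj n x) \<le> (\<Sum>i<n. \<bar>y i\<bar>)"
  unfolding inner_n_def
proof (rule sum_mono)
  fix i assume i: "i \<in> {..<n}"
  have "y i * radial_proj n x i \<le> \<bar>y i\<bar> * \<bar>radial_proj n x i\<bar>"
    by (metis abs_ge_self abs_mult)
  also have "\<dots> \<le> \<bar>y i\<bar> * 1"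
    by (rule mult_left_mono[OF abs_radial_proj_le]) (use i in auto)
  finally show "y i * radial_proj n x i \<le> \<bar>y i\<bar>" by simp
qed

lemma inner_n_radial_proj:
  "norm_n n x > 0 \<Longrightarrow> inner_n n y x = norm_n n x * inner_n n y (radial_proj n x)"
proof -
  assume r: "norm_n n x > 0"
  have "inner_n n y (radial_proj n x) = (\<Sum>i<n. y i * x i / norm_n n x)"
    unfolding inner_n_def radial_proj_def by (intro sum.cong) auto
  also have "\<dots> = inner_n n y x / norm_n n x"
    unfolding inner_n_def by (simp add: sum_divide_distrib)
  finally show ?thesis using r by simp
qed

lemma norm_n_radial_proj: "norm_n n x > 0 \<Longrightarrow> norm_n n (radial_proj n x) = 1"
proof -
  assume r: "norm_n n x > 0"
  have S: "(\<Sum>i<n. (x i)\<^sup>2) = (norm_n n x)\<^sup>2"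
    unfolding norm_n_def by (simp add: sum_nonneg)
  have "(\<Sum>i<n. (radial_proj n x i)\<^sup>2) = (\<Sum>i<n. (x i)\<^sup>2) / (norm_n n x)\<^sup>2"
    unfolding radial_proj_def by (simp add: sum_divide_distrib power_divide)
  also have "\<dots> = 1" using r S by simp
  finally show ?thesis unfolding norm_n_def[of n "radial_proj n x"] by simp
qed

lemma sets_sph_measure[measurable_cong]: "sets (sph_measure n) = sets (lborel_n n)"
  unfolding sph_measure_eq by simp

lemma space_sph_measure: "space (sph_measure n) = space (lborel_n n)"
  unfolding sph_measure_eq by simp

lemma emeasure_punctured_ball_pos:
  assumes n: "n \<ge> 1"
  shows "emeasure (lborel_n n) (punctured_ball n) > 0"
proof -
  interpret product_sigma_finite "\<lambda>_::nat. (lborel::real measure)" by (rule product_sigma_finite_lborel)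
  have sub: "PiE {..<n} (\<lambda>_. {0<..1 / real n}) \<subseteq> punctured_ball n"
  proof
    fix x assume x: "x \<in> PiE {..<n} (\<lambda>_. {0<..1 / real n})"
    have xi: "0 < x i" "x i \<le> 1 / real n" if "i \<in> {..<n}" for i
      using x that by (auto simp: PiE_iff)
    have "(\<Sum>i<n. (x i)\<^sup>2) \<le> (\<Sum>i<n. (1 / real n)\<^sup>2)"
    proof (rule sum_mono)
      fix i assume i: "i \<in> {..<n}"
      show "(x i)\<^sup>2 \<le> (1 / real n)\<^sup>2"
        by (rule power_mono[OF xi(2)[OF i]]) (use xi(1)[OF i] in linarith)
    qed
    also have "\<dots> = real n * (1 / real n)\<^sup>2" by simp
    also have "\<dots> = 1 / real n" using n by (simp add: power2_eq_square)
    also have "\<dots> \<le> 1" using n by simp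
    finally have le1: "norm_n n x \<le> 1" unfolding norm_n_def by simp
    have x0: "0 \<in> {..<n}" using n by simp
    have "0 < (\<Sum>i<n. (x i)\<^sup>2)"
      by (rule sum_pos2[OF _ x0]) (use xi(1)[OF x0] in auto)
    then have gt0: "norm_n n x > 0" unfolding norm_n_def by simp
    have "x \<in> space (lborel_n n)" using x by (simp add: space_PiM PiE_iff)
    then show "x \<in> punctured_ball n" unfolding punctured_ball_def using le1 gt0 by simp
  qed
  have "emeasure (lborel_n n) (PiE {..<n} (\<lambda>_. {0<..1 / real n}))
      = (\<Prod>i<n. emeasure lborel {0<..1 / real n})"
    by (subst emeasure_PiM) auto
  also have "\<dots> = (\<Prod>i<n. ennreal (1 / real n))"
    using n by (intro prod.cong refl) simp
  also have "\<dots> = ennreal (1 / real n) ^ n" by simp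
  also have "\<dots> = ennreal ((1 / real n) ^ n)" by (simp add: ennreal_power)
  finally have "emeasure (lborel_n n) (PiE {..<n} (\<lambda>_. {0<..1 / real n})) > 0" using n by simp
  also have "\<dots> \<le> emeasure (lborel_n n) (punctured_ball n)" using sub by (intro emeasure_mono) auto
  finally show ?thesis .
qed

lemma emeasure_punctured_ball_finite: "emeasure (lborel_n n) (punctured_ball n) < \<infinity>"
proof -
  have "emeasure (lborel_n n) (punctured_ball n)
      \<le> emeasure (lborel_n n) {x\<in>space (lborel_n n). norm_n n x \<le> 1}"
    unfolding punctured_ball_def by (intro emeasure_mono) auto
  also have "\<dots> \<le> 2 ^ n" by (rule emeasure_norm_n_le_1)
  also have "\<dots> < \<infinity>" by (simp add: power_less_top_ennreal)
  finally show ?thesis .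
qed

lemma prob_space_sph_measure:
  assumes n: "n \<ge> 1"
  shows "prob_space (sph_measure n)"
proof -
  interpret U: prob_space "uniform_measure (lborel_n n) (punctured_ball n)"
  proof (rule prob_space_uniform_measure)
    show "emeasure (lborel_n n) (punctured_ball n) \<noteq> 0"
      using emeasure_punctured_ball_pos[OF n] by simp
    show "emeasure (lborel_n n) (punctured_ball n) \<noteq> \<infinity>"
      using emeasure_punctured_ball_finite[of n] by simp
  qed
  show ?thesis unfolding sph_measure_eq
    by (rule U.prob_space_distr) (simp add: measurable_cong_sets[OF sets_uniform_measure refl])
qed

lemma AE_sph_measure_norm_n: "AE u in sph_measure n. norm_n n u = 1"
proof -
  have pm: "radial_proj n \<in> measurable (uniform_measure (lborel_n n) (punctured_ball n)) (lborel_n n)"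
    using measurable_cong_sets[OF sets_uniform_measure refl] measurable_radial_proj by blast
  have "AE x in uniform_measure (lborel_n n) (punctured_ball n). norm_n n (radial_proj n x) = 1"
    unfolding uniform_measure_def
  proof (subst AE_density)
    show "AE x in lborel_n n. 0 < indicator (punctured_ball n) x / emeasure (lborel_n n) (punctured_ball n)
        \<longrightarrow> norm_n n (radial_proj n x) = 1"
    proof (intro AE_I2 impI)
      fix x assume "0 < indicator (punctured_ball n) x / emeasure (lborel_n n) (punctured_ball n)"
      then have "x \<in> punctured_ball n" by (cases "x \<in> punctured_ball n") auto
      then show "norm_n n (radial_proj n x) = 1"
        unfolding punctured_ball_def using norm_n_radial_proj by auto
    qed
  qed measurable
  then show ?thesis unfolding sph_measure_eq
    by (subst AE_distr_iff[OF pm]) auto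
qed

lemma nn_integral_homogeneous_gauss:
  fixes \<psi> :: "(nat \<Rightarrow> real) \<Rightarrow> ennreal"
  assumes n: "n \<ge> 1"
    and \<psi>m[measurable]: "\<psi> \<in> borel_measurable (lborel_n n)"
    and hom: "\<And>x c. x \<in> space (lborel_n n) \<Longrightarrow> c > 0 \<Longrightarrow> \<psi> (restrict (\<lambda>i. c * x i) {..<n}) = \<psi> x"
    and bnd: "\<And>x. \<psi> x \<le> ennreal B"
  shows "(\<integral>\<^sup>+x. \<psi> x * ennreal (norm_n n x ^ j * exp (- (norm_n n x)\<^sup>2)) \<partial>lborel_n n)
    = (\<integral>\<^sup>+x. \<psi> x * indicator {0<..1} (norm_n n x) \<partial>lborel_n n) * ennreal (real n * gauss_moment (n - 1 + j))"
proof -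
  have "(\<integral>\<^sup>+x. \<psi> x * ennreal (norm_n n x ^ j * exp (- (norm_n n x)\<^sup>2)) \<partial>lborel_n n)
      = (\<integral>\<^sup>+x. \<psi> x * (\<lambda>s. ennreal (s ^ j * exp (- s\<^sup>2))) (norm_n n x) * indicator {0<..} (norm_n n x) \<partial>lborel_n n)"
    using AE_norm_n_neq_0[OF n]
    by (rule nn_integral_cong_AE[OF AE_mp]) (auto simp: indicator_def less_le norm_n_nonneg)
  also have "\<dots> = (\<integral>\<^sup>+x. \<psi> x * indicator {0<..1} (norm_n n x) \<partial>lborel_n n)
      * (\<integral>\<^sup>+s. ennreal (s ^ j * exp (- s\<^sup>2)) * ennreal (real n * s^(n-1)) * indicator {0<..} s \<partial>lborel)"
    by (rule nn_integral_polar_homogeneous[OF n \<psi>m hom bnd]) measurable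
  also have "(\<integral>\<^sup>+s. ennreal (s ^ j * exp (- s\<^sup>2)) * ennreal (real n * s^(n-1)) * indicator {0<..} s \<partial>lborel)
      = (\<integral>\<^sup>+s. ennreal (real n) * (ennreal (exp (- s\<^sup>2) * s ^ (n - 1 + j)) * indicator {0<..} s) \<partial>lborel)"
  proof (intro nn_integral_cong)
    fix s :: real
    show "ennreal (s ^ j * exp (- s\<^sup>2)) * ennreal (real n * s^(n-1)) * indicator {0<..} s
        = ennreal (real n) * (ennreal (exp (- s\<^sup>2) * s ^ (n - 1 + j)) * indicator {0<..} s)"
      by (cases "s > 0") (simp_all add: ennreal_mult'[symmetric] power_add ac_simps)
  qed
  also have "\<dots> = ennreal (real n * gauss_moment (n - 1 + j))"
    using nn_integral_gauss_moment[of "n - 1 + j"] by (simp add: nn_integral_cmult ennreal_mult')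
  finally show ?thesis .
qed

lemma ennreal_eq_divide_if_mult_eq:
  assumes "x * ennreal p = ennreal q" "0 < p"
  shows "x = ennreal (q / p)"
proof -
  have "x = x * (ennreal p * ennreal (1 / p))"
    using assms(2) by (simp flip: ennreal_mult)
  also have "\<dots> = ennreal q * ennreal (1 / p)"
    by (simp add: assms(1) mult.assoc[symmetric])
  also have "\<dots> = ennreal (q / p)"
    using assms(2) by (cases "q \<ge> 0") (simp_all flip: ennreal_mult add: ennreal_neg divide_nonpos_pos)
  finally show ?thesis .
qed

definition sph_pos_mean :: "nat \<Rightarrow> real" where
  "sph_pos_mean n = gauss_moment (n - 1) / (2 * sqrt pi * gauss_moment n)"

lemma sph_pos_mean_pos: "sph_pos_mean n > 0"
  unfolding sph_pos_mean_def using gauss_moment_pos by simp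

lemma nn_integral_sph_measure:
  assumes [measurable]: "f \<in> borel_measurable (lborel_n n)"
  shows "(\<integral>\<^sup>+u. f u \<partial>sph_measure n)
    = (\<integral>\<^sup>+x. f (radial_proj n x) * indicator {0<..1} (norm_n n x) \<partial>lborel_n n)
      / (\<integral>\<^sup>+x. 1 * indicator {0<..1} (norm_n n x) \<partial>lborel_n n)"
proof -
  have "(\<integral>\<^sup>+u. f u \<partial>sph_measure n)
      = (\<integral>\<^sup>+x. f (radial_proj n x) \<partial>uniform_measure (lborel_n n) (punctured_ball n))"
    unfolding sph_measure_eq
    by (rule nn_integral_distr) (simp_all add: measurable_cong_sets[OF sets_uniform_measure refl])
  also have "\<dots> = (\<integral>\<^sup>+x. f (radial_proj n x) * indicator {0<..1} (norm_n n x) \<partial>lborel_n n)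
      / (\<integral>\<^sup>+x. 1 * indicator {0<..1} (norm_n n x) \<partial>lborel_n n)"
    unfolding punctured_ball_def
    by (subst nn_integral_uniform_measure) (auto intro!: arg_cong2[where f="(/)"] nn_integral_cong
        simp: indicator_def simp flip: nn_integral_indicator)
  finally show ?thesis .
qed

lemma volume_punctured_ball:
  assumes n: "n \<ge> 1"
  shows "(\<integral>\<^sup>+x. 1 * indicator {0<..1} (norm_n n x) \<partial>lborel_n n) * ennreal (real n * gauss_moment (n - 1))
    = ennreal (sqrt pi ^ n)"
proof -
  interpret gauss: prob_space "gauss_n n"
    unfolding gauss_n_def by (intro prob_space_PiM prob_space_normal_density) simp
  have "(\<integral>\<^sup>+x. 1 * indicator {0<..1} (norm_n n x) \<partial>lborel_n n) * ennreal (real n * gauss_moment (n - 1))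
      = (\<integral>\<^sup>+x. 1 * ennreal (exp (- (norm_n n x)\<^sup>2)) \<partial>lborel_n n)"
    using nn_integral_homogeneous_gauss[OF n, of "\<lambda>_. 1" 1 0] by simp
  also have "\<dots> = ennreal (sqrt pi ^ n)"
    by (subst nn_integral_exp_neg_norm_n_sq) (simp_all add: gauss.emeasure_space_1)
  finally show ?thesis .
qed

lemma nn_integral_inner_n_radial_proj_ball:
  assumes n: "n \<ge> 1"
  shows "(\<integral>\<^sup>+x. ennreal (inner_n n y (radial_proj n x)) * indicator {0<..1} (norm_n n x) \<partial>lborel_n n)
      * ennreal (real n * gauss_moment n)
    = ennreal (sqrt pi ^ n * (norm_n n y / (2 * sqrt pi)))"
proof -
  let ?\<psi> = "\<lambda>x. ennreal (inner_n n y (radial_proj n x))"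
  have "(\<integral>\<^sup>+x. ?\<psi> x * indicator {0<..1} (norm_n n x) \<partial>lborel_n n) * ennreal (real n * gauss_moment n)
      = (\<integral>\<^sup>+x. ?\<psi> x * ennreal (norm_n n x ^ 1 * exp (- (norm_n n x)\<^sup>2)) \<partial>lborel_n n)"
    using nn_integral_homogeneous_gauss[OF n, of ?\<psi> "\<Sum>i<n. \<bar>y i\<bar>" 1] n
    by (simp add: radial_proj_scale inner_n_radial_proj_le ennreal_leI)
  also have "\<dots> = (\<integral>\<^sup>+x. ennreal (inner_n n y x) * ennreal (exp (- (norm_n n x)\<^sup>2)) \<partial>lborel_n n)"
  proof (intro nn_integral_cong)
    fix x assume x: "x \<in> space (lborel_n n)"
    show "?\<psi> x * ennreal (norm_n n x ^ 1 * exp (- (norm_n n x)\<^sup>2))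
        = ennreal (inner_n n y x) * ennreal (exp (- (norm_n n x)\<^sup>2))"
    proof (cases "norm_n n x = 0")
      case True
      then show ?thesis
        using norm_n_eq_0_iff[OF x] by (simp add: inner_n_def)
    next
      case False
      then have "norm_n n x > 0" using norm_n_nonneg[of n x] by simp
      then show ?thesis
        unfolding inner_n_radial_proj[OF \<open>norm_n n x > 0\<close>, of y] by (simp add: ennreal_mult' ac_simps)
    qed
  qed
  also have "\<dots> = ennreal (sqrt pi ^ n * (norm_n n y / (2 * sqrt pi)))"
    by (simp add: nn_integral_exp_neg_norm_n_sq nn_integral_inner_n_gauss_n[OF n] flip: ennreal_mult')
  finally show ?thesis .
qed

text \<open>Since \<open>ennreal\<close> truncates at \<open>0\<close>, the integrand is the positive part of \<open>\<langle>y, u\<rangle>\<close>.\<close>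

lemma nn_integral_inner_n_sph_measure:
  assumes n: "n \<ge> 1"
  shows "(\<integral>\<^sup>+u. ennreal (inner_n n y u) \<partial>sph_measure n) = ennreal (norm_n n y * sph_pos_mean n)"
proof -
  have pos: "0 < real n * gauss_moment n" "0 < real n * gauss_moment (n - 1)"
    using n gauss_moment_pos by simp_all
  have inner_m: "(\<lambda>u. ennreal (inner_n n y u)) \<in> borel_measurable (lborel_n n)"
    by measurable
  have "(\<integral>\<^sup>+u. ennreal (inner_n n y u) \<partial>sph_measure n)
      = ennreal (sqrt pi ^ n * (norm_n n y / (2 * sqrt pi)) / (real n * gauss_moment n))
        / ennreal (sqrt pi ^ n / (real n * gauss_moment (n - 1)))"
    unfolding nn_integral_sph_measure[OF inner_m]
    using ennreal_eq_divide_if_mult_eq[OF nn_integral_inner_n_radial_proj_ball[OF n] pos(1)]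
      ennreal_eq_divide_if_mult_eq[OF volume_punctured_ball[OF n] pos(2)]
    by simp
  also have "\<dots> = ennreal (norm_n n y * sph_pos_mean n)"
    using n pos gauss_moment_pos[of n] gauss_moment_pos[of "n - 1"] norm_n_nonneg[of n y]
    by (subst divide_ennreal) (simp_all add: sph_pos_mean_def field_simps)
  finally show ?thesis .
qed

lemma sqrt_n_sph_pos_mean_tendsto: "(\<lambda>n. sqrt (real n) * sph_pos_mean n) \<longlonglongrightarrow> 1 / sqrt (2 * pi)"
proof -
  define q where "q n = real n * (gauss_moment (n - 1) / gauss_moment n)\<^sup>2" for n
  have lo: "2 \<le> q n" if "n \<ge> 2" for n
  proof -
    have "2 / (real (n - 1) + 1) \<le> (gauss_moment (n - 1) / gauss_moment (n - 1 + 1))\<^sup>2"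
      using gauss_moment_ratio_bounds(1)[of "n - 1"] that by simp
    then show ?thesis using that unfolding q_def by (simp add: of_nat_diff field_simps)
  qed
  have hi: "q n \<le> 2 * real n / (real n - 1)" if "n \<ge> 2" for n
  proof -
    have "(gauss_moment (n - 1) / gauss_moment (n - 1 + 1))\<^sup>2 \<le> 2 / real (n - 1)"
      using gauss_moment_ratio_bounds(2)[of "n - 1"] that by simp
    then have "real n * (gauss_moment (n - 1) / gauss_moment n)\<^sup>2 \<le> real n * (2 / real (n - 1))"
      using that by (intro mult_left_mono) auto
    moreover have "real n * (2 / real (n - 1)) = 2 * real n / (real n - 1)"
      using that by (simp add: of_nat_diff)
    ultimately show ?thesis unfolding q_def by simp
  qed
  have lim2: "(\<lambda>n. 2 * real n / (real n - 1)) \<longlonglongrightarrow> 2"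
  proof -
    have "(\<lambda>n. 2 / (1 - 1 / real n)) \<longlonglongrightarrow> 2 / (1 - 0)"
      by (intro tendsto_intros lim_inverse_n) auto
    then have l: "(\<lambda>n. 2 / (1 - 1 / real n)) \<longlonglongrightarrow> 2" by simp
    have "eventually (\<lambda>n. 2 / (1 - 1 / real n) = 2 * real n / (real n - 1)) sequentially"
      using eventually_ge_at_top[of "2::nat"] by eventually_elim (simp add: field_simps)
    then show ?thesis by (rule Lim_transform_eventually[OF l])
  qed
  have qlim: "q \<longlonglongrightarrow> 2"
    by (rule tendsto_sandwich[OF _ _ tendsto_const lim2])
       (auto intro!: eventually_mono[OF eventually_ge_at_top[of 2]] lo hi)
  have "(\<lambda>n. sqrt (q n) / (2 * sqrt pi)) \<longlonglongrightarrow> sqrt 2 / (2 * sqrt pi)"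
    by (intro tendsto_intros qlim) auto
  moreover have "sqrt (q n) / (2 * sqrt pi) = sqrt (real n) * sph_pos_mean n" for n
    unfolding q_def sph_pos_mean_def using gauss_moment_pos[of n] gauss_moment_pos[of "n-1"]
    by (simp add: real_sqrt_mult real_sqrt_divide)
  moreover have "sqrt 2 / (2 * sqrt pi) = 1 / sqrt (2 * pi)"
    by (simp add: real_sqrt_mult field_simps)
  ultimately show ?thesis by simp
qed

section \<open>The hyperplane intensity\<close>

lemma sets_hyp_intensity: "sets (hyp_intensity n \<gamma>) = sets (lborel_n n \<Otimes>\<^sub>M lborel)"
  unfolding hyp_intensity_def by (simp add: sets_pair_measure_cong[OF sets_sph_measure refl])

lemma space_hyp_intensity: "space (hyp_intensity n \<gamma>) = space (lborel_n n) \<times> UNIV"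
  unfolding hyp_intensity_def by (simp add: space_pair_measure space_sph_measure)

lemma emeasure_hyp_intensity:
  assumes B: "B \<in> sets (lborel_n n \<Otimes>\<^sub>M lborel)"
  shows "emeasure (hyp_intensity n \<gamma>) B =
    (\<integral>\<^sup>+u. \<integral>\<^sup>+\<tau>. ennreal (2 * \<gamma>) * indicator {0..} \<tau> * indicator B (u, \<tau>) \<partial>lborel \<partial>sph_measure n)"
proof -
  have B': "B \<in> sets (sph_measure n \<Otimes>\<^sub>M lborel)"
    using B by (simp add: sets_pair_measure_cong[OF sets_sph_measure refl])
  have "emeasure (hyp_intensity n \<gamma>) B
      = (\<integral>\<^sup>+p. ennreal (2 * \<gamma>) * indicator {0..} (snd p) * indicator B p \<partial>(sph_measure n \<Otimes>\<^sub>M lborel))"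
    unfolding hyp_intensity_def by (rule emeasure_density) (use B' in auto)
  also have "\<dots> = (\<integral>\<^sup>+u. \<integral>\<^sup>+\<tau>. ennreal (2 * \<gamma>) * indicator {0..} \<tau> * indicator B (u, \<tau>) \<partial>lborel \<partial>sph_measure n)"
    using B' by (subst lborel.nn_integral_fst[symmetric]) auto
  finally show ?thesis .
qed

text \<open>For \<open>a = inner_n n y\<close>, \<open>hyps_below n a\<close> consists of the hyperplanes in the support of
  the intensity that separate \<open>y\<close> from the origin.\<close>

definition hyps_below :: "nat \<Rightarrow> ((nat \<Rightarrow> real) \<Rightarrow> real) \<Rightarrow> ((nat \<Rightarrow> real) \<times> real) set" where
  "hyps_below n a = {p \<in> space (lborel_n n) \<times> UNIV. norm_n n (fst p) = 1 \<and> 0 \<le> snd p \<and> snd p < a (fst p)}"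

definition hyps_degenerate :: "nat \<Rightarrow> ((nat \<Rightarrow> real) \<times> real) set" where
  "hyps_degenerate n = {p \<in> space (lborel_n n) \<times> UNIV. \<not> (norm_n n (fst p) = 1 \<and> 0 \<le> snd p)}"

lemma sets_hyps_below:
  assumes [measurable]: "a \<in> borel_measurable (lborel_n n)"
  shows "hyps_below n a \<in> sets (lborel_n n \<Otimes>\<^sub>M lborel)"
proof -
  have "hyps_below n a
      = {p \<in> space (lborel_n n \<Otimes>\<^sub>M lborel). norm_n n (fst p) = 1 \<and> 0 \<le> snd p \<and> snd p < a (fst p)}"
    unfolding hyps_below_def by (simp add: space_pair_measure)
  also have "\<dots> \<in> sets (lborel_n n \<Otimes>\<^sub>M lborel)" by measurable
  finally show ?thesis .
qed

lemma sets_hyps_degenerate: "hyps_degenerate n \<in> sets (lborel_n n \<Otimes>\<^sub>M lborel)"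
proof -
  have "hyps_degenerate n
      = {p \<in> space (lborel_n n \<Otimes>\<^sub>M lborel). \<not> (norm_n n (fst p) = 1 \<and> 0 \<le> snd p)}"
    unfolding hyps_degenerate_def by (simp add: space_pair_measure)
  also have "\<dots> \<in> sets (lborel_n n \<Otimes>\<^sub>M lborel)" by measurable
  finally show ?thesis .
qed

lemma emeasure_hyps_below:
  assumes am[measurable]: "a \<in> borel_measurable (lborel_n n)"
  shows "emeasure (hyp_intensity n \<gamma>) (hyps_below n a)
    = ennreal (2 * \<gamma>) * (\<integral>\<^sup>+u. ennreal (a u) \<partial>sph_measure n)"
proof -
  have "emeasure (hyp_intensity n \<gamma>) (hyps_below n a) = (\<integral>\<^sup>+u. \<integral>\<^sup>+\<tau>. ennreal (2 * \<gamma>)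
      * indicator {0..} \<tau> * indicator (hyps_below n a) (u, \<tau>) \<partial>lborel \<partial>sph_measure n)"
    by (rule emeasure_hyp_intensity[OF sets_hyps_below[OF am]])
  also have "\<dots> = (\<integral>\<^sup>+u. ennreal (2 * \<gamma>) * ennreal (a u) \<partial>sph_measure n)"
  proof (rule nn_integral_cong_AE)
    show "AE u in sph_measure n. (\<integral>\<^sup>+\<tau>. ennreal (2 * \<gamma>) * indicator {0..} \<tau>
        * indicator (hyps_below n a) (u, \<tau>) \<partial>lborel) = ennreal (2 * \<gamma>) * ennreal (a u)"
      using AE_sph_measure_norm_n[of n] AE_space
    proof eventually_elim
      case (elim u)
      have "(\<integral>\<^sup>+\<tau>. ennreal (2 * \<gamma>) * indicator {0..} \<tau> * indicator (hyps_below n a) (u, \<tau>) \<partial>lborel)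
          = (\<integral>\<^sup>+\<tau>. ennreal (2 * \<gamma>) * indicator {0..<a u} \<tau> \<partial>lborel)"
        using elim by (intro nn_integral_cong) (auto simp: hyps_below_def indicator_def space_sph_measure)
      also have "\<dots> = ennreal (2 * \<gamma>) * emeasure lborel {0..<a u}"
        by (rule nn_integral_cmult_indicator) auto
      also have "emeasure lborel {0..<a u} = ennreal (a u)"
        by (cases "0 \<le> a u") (auto simp: ennreal_neg)
      finally show ?case .
    qed
  qed
  also have "\<dots> = ennreal (2 * \<gamma>) * (\<integral>\<^sup>+u. ennreal (a u) \<partial>sph_measure n)"
    by (rule nn_integral_cmult) (simp add: measurable_cong_sets[OF sets_sph_measure refl])
  finally show ?thesis .
qed

lemma emeasure_hyps_degenerate: "emeasure (hyp_intensity n \<gamma>) (hyps_degenerate n) = 0"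
proof -
  have "emeasure (hyp_intensity n \<gamma>) (hyps_degenerate n) = (\<integral>\<^sup>+u. \<integral>\<^sup>+\<tau>. ennreal (2 * \<gamma>)
      * indicator {0..} \<tau> * indicator (hyps_degenerate n) (u, \<tau>) \<partial>lborel \<partial>sph_measure n)"
    by (rule emeasure_hyp_intensity[OF sets_hyps_degenerate])
  also have "\<dots> = (\<integral>\<^sup>+u. 0 \<partial>sph_measure n)"
  proof (rule nn_integral_cong_AE)
    show "AE u in sph_measure n. (\<integral>\<^sup>+\<tau>. ennreal (2 * \<gamma>) * indicator {0..} \<tau>
        * indicator (hyps_degenerate n) (u, \<tau>) \<partial>lborel) = 0"
      using AE_sph_measure_norm_n[of n]
    proof eventually_elim
      case (elim u)
      then have "(\<lambda>\<tau>. ennreal (2 * \<gamma>) * indicator {0..} \<tau> * indicator (hyps_degenerate n) (u, \<tau>))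
          = (\<lambda>_. 0)"
        by (auto simp: hyps_degenerate_def indicator_def)
      then show ?case by simp
    qed
  qed
  finally show ?thesis by simp
qed

lemma ennreal_add_le: "0 \<le> e \<Longrightarrow> ennreal (a + e) \<le> ennreal a + ennreal e"
  by (cases "a \<ge> 0") (auto simp: ennreal_neg intro: order_trans[OF ennreal_leI add_increasing])

lemma emeasure_hyps_below_plus_le:
  assumes n: "n \<ge> 1" and g: "\<gamma> > 0" and eta: "\<eta> \<ge> 0"
  shows "emeasure (hyp_intensity n \<gamma>) (hyps_below n (\<lambda>u. inner_n n z u + \<eta>))
    \<le> ennreal (2 * \<gamma> * (norm_n n z * sph_pos_mean n + \<eta>))"
proof -
  interpret S: prob_space "sph_measure n" by (rule prob_space_sph_measure[OF n])
  have "(\<integral>\<^sup>+u. ennreal (inner_n n z u + \<eta>) \<partial>sph_measure n)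
      \<le> (\<integral>\<^sup>+u. ennreal (inner_n n z u) + ennreal \<eta> \<partial>sph_measure n)"
    using eta by (intro nn_integral_mono ennreal_add_le)
  also have "\<dots> = ennreal (norm_n n z * sph_pos_mean n) + ennreal \<eta>"
    by (subst nn_integral_add)
      (auto simp: nn_integral_inner_n_sph_measure[OF n] S.emeasure_space_1
        measurable_cong_sets[OF sets_sph_measure refl])
  also have "\<dots> = ennreal (norm_n n z * sph_pos_mean n + \<eta>)"
    using eta norm_n_nonneg[of n z] sph_pos_mean_pos[of n] by simp
  finally have "ennreal (2 * \<gamma>) * (\<integral>\<^sup>+u. ennreal (inner_n n z u + \<eta>) \<partial>sph_measure n)
      \<le> ennreal (2 * \<gamma> * (norm_n n z * sph_pos_mean n + \<eta>))"
    using g by (simp add: ennreal_mult' mult_left_mono)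
  then show ?thesis
    by (subst emeasure_hyps_below) auto
qed

text \<open>The degenerate parameters are added because \<open>zero_cell\<close> takes every pair of the process
  into account, and they are a.s. absent.\<close>

lemma hyp_intensity_hyps_below_plus:
  fixes n :: nat and z :: "nat \<Rightarrow> real" and \<gamma> \<eta> :: real
  assumes n: "n \<ge> 1" and g: "\<gamma> > 0" and eta: "\<eta> \<ge> 0"
  defines "A \<equiv> hyps_below n (\<lambda>u. inner_n n z u + \<eta>) \<union> hyps_degenerate n"
  shows "A \<in> sets (hyp_intensity n \<gamma>)" and "emeasure (hyp_intensity n \<gamma>) A < \<infinity>"
    and "measure (hyp_intensity n \<gamma>) A \<le> 2 * \<gamma> * (norm_n n z * sph_pos_mean n + \<eta>)"
proof -
  have null: "hyps_degenerate n \<in> null_sets (hyp_intensity n \<gamma>)"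
    using sets_hyps_degenerate[of n] unfolding sets_hyp_intensity[of n \<gamma>, symmetric]
    by (intro null_setsI emeasure_hyps_degenerate)
  have below: "hyps_below n (\<lambda>u. inner_n n z u + \<eta>) \<in> sets (hyp_intensity n \<gamma>)"
    unfolding sets_hyp_intensity by (rule sets_hyps_below) measurable
  then show "A \<in> sets (hyp_intensity n \<gamma>)"
    unfolding A_def using null by auto
  have le: "emeasure (hyp_intensity n \<gamma>) A \<le> ennreal (2 * \<gamma> * (norm_n n z * sph_pos_mean n + \<eta>))"
    unfolding A_def emeasure_Un_null_set[OF below null] by (rule emeasure_hyps_below_plus_le[OF n g eta])
  then show "emeasure (hyp_intensity n \<gamma>) A < \<infinity>"
    using le_less_trans by fastforce
  show "measure (hyp_intensity n \<gamma>) A \<le> 2 * \<gamma> * (norm_n n z * sph_pos_mean n + \<eta>)"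
    unfolding measure_def using le g eta norm_n_nonneg[of n z] sph_pos_mean_pos[of n]
    by (intro enn2real_leI) auto
qed

lemma hyp_intensity_hyps_below_minus:
  assumes n: "n \<ge> 1" and g: "\<gamma> > 0" and eta: "\<eta> \<ge> 0"
  shows "hyps_below n (\<lambda>u. inner_n n z u - \<eta>) \<in> sets (hyp_intensity n \<gamma>)"
    and "emeasure (hyp_intensity n \<gamma>) (hyps_below n (\<lambda>u. inner_n n z u - \<eta>)) < \<infinity>"
    and "2 * \<gamma> * (norm_n n z * sph_pos_mean n - \<eta>)
      \<le> measure (hyp_intensity n \<gamma>) (hyps_below n (\<lambda>u. inner_n n z u - \<eta>))"
proof -
  show "hyps_below n (\<lambda>u. inner_n n z u - \<eta>) \<in> sets (hyp_intensity n \<gamma>)"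
    unfolding sets_hyp_intensity by (rule sets_hyps_below) measurable
  interpret S: prob_space "sph_measure n" by (rule prob_space_sph_measure[OF n])
  define I where "I = (\<integral>\<^sup>+u. ennreal (inner_n n z u - \<eta>) \<partial>sph_measure n)"
  have "I \<le> (\<integral>\<^sup>+u. ennreal (inner_n n z u) \<partial>sph_measure n)"
    unfolding I_def using eta by (intro nn_integral_mono) (simp add: ennreal_leI)
  then obtain m where m: "I = ennreal m" "m \<ge> 0"
    using nn_integral_inner_n_sph_measure[OF n] by (cases I) (auto simp: top_unique)
  have "ennreal (norm_n n z * sph_pos_mean n) = (\<integral>\<^sup>+u. ennreal (inner_n n z u) \<partial>sph_measure n)"
    by (rule nn_integral_inner_n_sph_measure[OF n, symmetric])
  also have "\<dots> \<le> (\<integral>\<^sup>+u. ennreal (inner_n n z u - \<eta>) + ennreal \<eta> \<partial>sph_measure n)"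
    using eta ennreal_add_le[of \<eta> "inner_n n z _ - \<eta>"] by (intro nn_integral_mono) simp
  also have "\<dots> = ennreal (m + \<eta>)"
    using m eta unfolding I_def
    by (subst nn_integral_add) (auto simp: S.emeasure_space_1 measurable_cong_sets[OF sets_sph_measure refl])
  finally have "norm_n n z * sph_pos_mean n \<le> m + \<eta>"
    using m eta by (subst (asm) ennreal_le_iff) auto
  moreover have E: "emeasure (hyp_intensity n \<gamma>) (hyps_below n (\<lambda>u. inner_n n z u - \<eta>)) = ennreal (2 * \<gamma> * m)"
    using g m unfolding I_def by (subst emeasure_hyps_below) (auto simp: ennreal_mult')
  ultimately show "emeasure (hyp_intensity n \<gamma>) (hyps_below n (\<lambda>u. inner_n n z u - \<eta>)) < \<infinity>"
    and "2 * \<gamma> * (norm_n n z * sph_pos_mean n - \<eta>)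
      \<le> measure (hyp_intensity n \<gamma>) (hyps_below n (\<lambda>u. inner_n n z u - \<eta>))"
    using g m by (simp_all add: measure_def)
qed

lemma poisson_process_void:
  assumes pp: "poisson_process M X \<Theta>" and A: "A \<in> sets \<Theta>" "emeasure \<Theta> A < \<infinity>"
  shows "{\<omega> \<in> space M. X \<omega> \<inter> A = {}} \<in> sets M"
    and "measure M {\<omega> \<in> space M. X \<omega> \<inter> A = {}} = exp (- measure \<Theta> A)"
proof -
  have eq: "{\<omega> \<in> space M. finite (X \<omega> \<inter> A) \<and> card (X \<omega> \<inter> A) = 0} = {\<omega> \<in> space M. X \<omega> \<inter> A = {}}"
    by auto
  from pp A have "{\<omega> \<in> space M. finite (X \<omega> \<inter> A) \<and> card (X \<omega> \<inter> A) = 0} \<in> sets M \<and>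
     measure M {\<omega> \<in> space M. finite (X \<omega> \<inter> A) \<and> card (X \<omega> \<inter> A) = 0}
       = exp (- measure \<Theta> A) * (measure \<Theta> A) ^ 0 / fact 0"
    unfolding poisson_process_def by blast
  then show "{\<omega> \<in> space M. X \<omega> \<inter> A = {}} \<in> sets M"
    and "measure M {\<omega> \<in> space M. X \<omega> \<inter> A = {}} = exp (- measure \<Theta> A)"
    unfolding eq by simp_all
qed

lemma indep_of_process_void:
  assumes M: "prob_space M" and ind: "indep_of_process M X \<Theta> Y N"
    and C: "C \<in> sets N" and A: "A \<in> sets \<Theta>"
  shows "measure M ({\<omega> \<in> space M. Y \<omega> \<in> C} \<inter> {\<omega> \<in> space M. X \<omega> \<inter> A = {}})
       = measure M {\<omega> \<in> space M. Y \<omega> \<in> C} * measure M {\<omega> \<in> space M. X \<omega> \<inter> A = {}}"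
proof -
  interpret prob_space M by (rule M)
  have "{\<omega> \<in> space M. Y \<omega> \<in> C} = Y -` C \<inter> space M"
    by auto
  then have Y_event: "{\<omega> \<in> space M. Y \<omega> \<in> C} \<in> sigma_sets (space M) {Y -` B \<inter> space M | B. B \<in> sets N}"
    using C by auto
  have "{\<omega> \<in> space M. finite (X \<omega> \<inter> A) \<and> card (X \<omega> \<inter> A) = 0} = {\<omega> \<in> space M. X \<omega> \<inter> A = {}}"
    by auto
  then have X_event: "{\<omega> \<in> space M. X \<omega> \<inter> A = {}} \<in> sigma_sets (space M) (process_events M X \<Theta>)"
    unfolding process_events_def using A by (intro sigma_sets.Basic) blast
  show ?thesis
    using indep_setD[OF ind[unfolded indep_of_process_def] Y_event X_event] .
qed

lemma prob_norm_n_eq_radius: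
  assumes n: "n \<ge> 1" and d: "\<delta> > 0" and Ym: "Y \<in> measurable M (lebesgue_n n)"
    and Yd: "distr M (lebesgue_n n) Y = unif_sphere n \<delta>"
  shows "measure M {\<omega> \<in> space M. Y \<omega> \<in> {y \<in> space (lborel_n n). norm_n n y = \<delta>}} = 1"
proof -
  interpret S: prob_space "sph_measure n" by (rule prob_space_sph_measure[OF n])
  define Sd where "Sd = {y \<in> space (lborel_n n). norm_n n y = \<delta>}"
  have Sd: "Sd \<in> sets (lborel_n n)" unfolding Sd_def by measurable
  have sc: "(\<lambda>u. restrict (\<lambda>i. \<delta> * u i) {..<n}) \<in> measurable (sph_measure n) (lborel_n n)"
    using measurable_cong_sets[OF sets_sph_measure refl] measurable_restrict_scale by blast
  have "measure M {\<omega> \<in> space M. Y \<omega> \<in> Sd} = measure M (Y -` Sd \<inter> space M)"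
    by (intro arg_cong[where f="measure M"]) auto
  also have "\<dots> = measure (unif_sphere n \<delta>) Sd"
    using Ym Sd by (simp add: measure_distr Yd[symmetric] lebesgue_n_eq)
  also have "\<dots> = measure (sph_measure n) ((\<lambda>u. restrict (\<lambda>i. \<delta> * u i) {..<n}) -` Sd \<inter> space (sph_measure n))"
    unfolding unif_sphere_def lebesgue_n_eq by (rule measure_distr[OF sc Sd])
  also have "(\<lambda>u. restrict (\<lambda>i. \<delta> * u i) {..<n}) -` Sd \<inter> space (sph_measure n)
      = {u \<in> space (sph_measure n). norm_n n u = 1}"
    unfolding Sd_def using d norm_n_scale[of \<delta> n] by (auto simp: space_PiM)
  also have "measure (sph_measure n) {u \<in> space (sph_measure n). norm_n n u = 1} = 1"
    using AE_sph_measure_norm_n by (subst S.prob_Collect_eq_1) (auto simp: space_sph_measure)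
  finally show ?thesis unfolding Sd_def .
qed

section \<open>The zero cell probability in fixed dimension\<close>

lemma floor_divide_eq_imp_abs_diff_le:
  fixes a b e :: real
  assumes "\<lfloor>a / e\<rfloor> = \<lfloor>b / e\<rfloor>" "e > 0"
  shows "\<bar>a - b\<bar> \<le> e"
proof -
  have "\<bar>a / e - b / e\<bar> < 1"
    using assms(1) floor_correct[of "a / e"] floor_correct[of "b / e"] by linarith
  then show ?thesis
    using assms(2) by (simp add: diff_divide_distrib[symmetric] abs_divide divide_less_eq)
qed

text \<open>The cells are the cubes of the grid \<open>\<epsilon> \<int>\<^sup>n\<close> that meet the sphere.\<close>

lemma sphere_grid_partition:
  assumes e: "\<epsilon> > 0"
  obtains K :: "(nat \<Rightarrow> int) set" and C z where "finite K" "disjoint_family_on C K"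
    "\<And>k. C k \<in> sets (lborel_n n)"
    "{y \<in> space (lborel_n n). norm_n n y = \<delta>} \<subseteq> (\<Union>k\<in>K. C k)"
    "\<And>k. k \<in> K \<Longrightarrow> z k \<in> C k \<and> norm_n n (z k) = \<delta>"
    "\<And>k y y' i. y \<in> C k \<Longrightarrow> y' \<in> C k \<Longrightarrow> i < n \<Longrightarrow> \<bar>y i - y' i\<bar> \<le> \<epsilon>"
proof -
  define S where "S = {y \<in> space (lborel_n n). norm_n n y = \<delta>}"
  define N :: int where "N = \<lceil>\<delta> / \<epsilon>\<rceil>"
  define C where "C k = {y \<in> space (lborel_n n). \<forall>i\<in>{..<n}. \<lfloor>y i / \<epsilon>\<rfloor> = k i}" for k :: "nat \<Rightarrow> int"
  define K where "K = {k \<in> PiE {..<n} (\<lambda>_. {-N..N}). C k \<inter> S \<noteq> {}}"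
  define z where "z k = (SOME y. y \<in> C k \<inter> S)" for k
  show ?thesis
  proof
    show "finite K"
      unfolding K_def by (rule finite_subset[of _ "PiE {..<n} (\<lambda>_. {-N..N})"]) (auto intro!: finite_PiE)
    show "disjoint_family_on C K"
      unfolding disjoint_family_on_def C_def K_def
      by (auto simp: PiE_iff extensional_def fun_eq_iff) (metis lessThan_iff)
    show "C k \<in> sets (lborel_n n)" for k
      unfolding C_def by measurable
    show "z k \<in> C k \<and> norm_n n (z k) = \<delta>" if "k \<in> K" for k
      using someI_ex[of "\<lambda>y. y \<in> C k \<inter> S"] that unfolding K_def z_def S_def by blast
    show "\<bar>y i - y' i\<bar> \<le> \<epsilon>" if "y \<in> C k" "y' \<in> C k" "i < n" for k y y' i
      using that by (intro floor_divide_eq_imp_abs_diff_le[OF _ e]) (auto simp: C_def)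
    show "{y \<in> space (lborel_n n). norm_n n y = \<delta>} \<subseteq> (\<Union>k\<in>K. C k)"
      unfolding S_def[symmetric]
    proof
      fix y assume y: "y \<in> S"
      have "-N \<le> \<lfloor>y i / \<epsilon>\<rfloor> \<and> \<lfloor>y i / \<epsilon>\<rfloor> \<le> N" if "i < n" for i
      proof -
        have "\<bar>y i\<bar> \<le> \<delta>" using abs_le_norm_n[OF that, of y] y unfolding S_def by simp
        then have "\<bar>y i\<bar> / \<epsilon> \<le> \<delta> / \<epsilon>"
          using e by (simp add: divide_right_mono)
        then have "\<bar>y i / \<epsilon>\<bar> \<le> of_int N"
          unfolding N_def using e by (simp add: abs_divide) (meson le_of_int_ceiling order_trans)
        then have "- of_int N \<le> y i / \<epsilon>" "y i / \<epsilon> \<le> of_int N"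
          unfolding abs_le_iff by linarith+
        then show ?thesis
          by (simp add: le_floor_iff floor_le_iff)
      qed
      then have "restrict (\<lambda>i. \<lfloor>y i / \<epsilon>\<rfloor>) {..<n} \<in> K" "y \<in> C (restrict (\<lambda>i. \<lfloor>y i / \<epsilon>\<rfloor>) {..<n})"
        using y unfolding K_def C_def S_def by auto
      then show "y \<in> (\<Union>k\<in>K. C k)" by blast
    qed
  qed
qed

lemma in_zero_cell_if_no_hyps_below:
  assumes X: "X \<subseteq> space (lborel_n n) \<times> UNIV" and y: "y \<in> space (lborel_n n)"
    and close: "\<And>i. i < n \<Longrightarrow> \<bar>y i - z i\<bar> \<le> \<epsilon>"
    and void: "X \<inter> (hyps_below n (\<lambda>u. inner_n n z u + real n * \<epsilon>) \<union> hyps_degenerate n) = {}"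
  shows "y \<in> zero_cell n X"
proof -
  have "inner_n n y u \<le> \<tau>" if u\<tau>: "(u, \<tau>) \<in> X" for u \<tau>
  proof -
    have u: "u \<in> space (lborel_n n)" using X u\<tau> by auto
    have "(u, \<tau>) \<notin> hyps_degenerate n" using void u\<tau> by blast
    then have u1: "norm_n n u = 1" and \<tau>: "0 \<le> \<tau>"
      using u unfolding hyps_degenerate_def by auto
    have "(u, \<tau>) \<notin> hyps_below n (\<lambda>u. inner_n n z u + real n * \<epsilon>)" using void u\<tau> by blast
    then have "inner_n n z u + real n * \<epsilon> \<le> \<tau>"
      using u u1 \<tau> unfolding hyps_below_def by auto
    moreover have "\<bar>inner_n n y u - inner_n n z u\<bar> \<le> real n * \<epsilon>"
      using close u1 by (rule inner_n_diff_le)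
    ultimately show ?thesis by linarith
  qed
  then show ?thesis
    unfolding zero_cell_def lebesgue_n_eq using y by blast
qed

lemma no_hyps_below_if_in_zero_cell:
  assumes y: "y \<in> zero_cell n X" and close: "\<And>i. i < n \<Longrightarrow> \<bar>y i - z i\<bar> \<le> \<epsilon>"
  shows "X \<inter> hyps_below n (\<lambda>u. inner_n n z u - real n * \<epsilon>) = {}"
proof (rule ccontr)
  assume "X \<inter> hyps_below n (\<lambda>u. inner_n n z u - real n * \<epsilon>) \<noteq> {}"
  then obtain u \<tau> where u\<tau>: "(u, \<tau>) \<in> X" "norm_n n u = 1" "\<tau> < inner_n n z u - real n * \<epsilon>"
    unfolding hyps_below_def by auto
  moreover have "inner_n n y u \<le> \<tau>"
    using y u\<tau>(1) unfolding zero_cell_def by auto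
  moreover have "\<bar>inner_n n y u - inner_n n z u\<bar> \<le> real n * \<epsilon>"
    using close u\<tau>(2) by (rule inner_n_diff_le)
  ultimately show False by linarith
qed

locale zero_cell_model =
  fixes M :: "'w measure" and X :: "'w \<Rightarrow> ((nat \<Rightarrow> real) \<times> real) set" and Y :: "'w \<Rightarrow> nat \<Rightarrow> real"
    and n :: nat and \<gamma> \<delta> :: real
  assumes n: "n \<ge> 1" and \<delta>: "\<delta> > 0" and \<gamma>: "\<gamma> > 0"
    and poisson: "poisson_process M X (hyp_intensity n \<gamma>)"
    and Y_measurable: "Y \<in> measurable M (lebesgue_n n)"
    and Y_distr: "distr M (lebesgue_n n) Y = unif_sphere n \<delta>"
    and indep: "indep_of_process M X (hyp_intensity n \<gamma>) Y (lebesgue_n n)"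
    and zero_cell_event: "{\<omega> \<in> space M. Y \<omega> \<in> zero_cell n (X \<omega>)} \<in> sets M"
begin

sublocale prob_space M
  using poisson by (simp add: poisson_process_def)

lemma X_subset_space: "\<omega> \<in> space M \<Longrightarrow> X \<omega> \<subseteq> space (lborel_n n) \<times> UNIV"
  using poisson by (auto simp: poisson_process_def space_hyp_intensity)

lemma Y_event: "C \<in> sets (lborel_n n) \<Longrightarrow> {\<omega> \<in> space M. Y \<omega> \<in> C} \<in> events"
  using measurable_sets[OF Y_measurable, of C] by (simp add: lebesgue_n_eq Int_def conj_commute)

lemma prob_Y_in_and_void:
  assumes C: "C \<in> sets (lborel_n n)"
    and A: "A \<in> sets (hyp_intensity n \<gamma>)" "emeasure (hyp_intensity n \<gamma>) A < \<infinity>"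
  shows "{\<omega> \<in> space M. Y \<omega> \<in> C} \<inter> {\<omega> \<in> space M. X \<omega> \<inter> A = {}} \<in> events"
    and "prob ({\<omega> \<in> space M. Y \<omega> \<in> C} \<inter> {\<omega> \<in> space M. X \<omega> \<inter> A = {}})
      = prob {\<omega> \<in> space M. Y \<omega> \<in> C} * exp (- measure (hyp_intensity n \<gamma>) A)"
  using Y_event[OF C] poisson_process_void[OF poisson] indep_of_process_void[OF prob_space_axioms indep]
    C A by (auto simp: lebesgue_n_eq)

lemma sum_prob_Y_in_partition:
  assumes "finite K" "disjoint_family_on C K" "\<And>k. C k \<in> sets (lborel_n n)"
    and cover: "{y \<in> space (lborel_n n). norm_n n y = \<delta>} \<subseteq> (\<Union>k\<in>K. C k)"
  shows "(\<Sum>k\<in>K. prob {\<omega> \<in> space M. Y \<omega> \<in> C k}) = 1"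
proof -
  have "(\<Sum>k\<in>K. prob {\<omega> \<in> space M. Y \<omega> \<in> C k}) = prob (\<Union>k\<in>K. {\<omega> \<in> space M. Y \<omega> \<in> C k})"
    using assms by (intro finite_measure_finite_Union[symmetric])
      (auto simp: disjoint_family_on_def intro!: Y_event)
  moreover have "1 \<le> prob (\<Union>k\<in>K. {\<omega> \<in> space M. Y \<omega> \<in> C k})"
  proof -
    have "1 = prob {\<omega> \<in> space M. Y \<omega> \<in> {y \<in> space (lborel_n n). norm_n n y = \<delta>}}"
      using prob_norm_n_eq_radius[OF n \<delta> Y_measurable Y_distr] by simp
    also have "\<dots> \<le> prob (\<Union>k\<in>K. {\<omega> \<in> space M. Y \<omega> \<in> C k})"
      using assms cover by (intro finite_measure_mono sets.finite_UN Y_event) auto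
    finally show ?thesis .
  qed
  ultimately show ?thesis
    using prob_le_1 by (metis antisym)
qed

lemma prob_zero_cell_ge:
  assumes e: "\<epsilon> > 0"
  shows "exp (- (2 * \<gamma> * (\<delta> * sph_pos_mean n + real n * \<epsilon>)))
    \<le> prob {\<omega> \<in> space M. Y \<omega> \<in> zero_cell n (X \<omega>)}"
proof -
  obtain K :: "(nat \<Rightarrow> int) set" and C z where K: "finite K" "disjoint_family_on C K"
      and C: "\<And>k. C k \<in> sets (lborel_n n)" "{y \<in> space (lborel_n n). norm_n n y = \<delta>} \<subseteq> (\<Union>k\<in>K. C k)"
      and z: "\<And>k. k \<in> K \<Longrightarrow> z k \<in> C k \<and> norm_n n (z k) = \<delta>"
      and close: "\<And>k y y' i. y \<in> C k \<Longrightarrow> y' \<in> C k \<Longrightarrow> i < n \<Longrightarrow> \<bar>y i - y' i\<bar> \<le> \<epsilon>"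
    using sphere_grid_partition[OF e, where n=n and \<delta>=\<delta>] by blast
  define A where "A k = hyps_below n (\<lambda>u. inner_n n (z k) u + real n * \<epsilon>) \<union> hyps_degenerate n" for k
  define V where "V k = {\<omega> \<in> space M. Y \<omega> \<in> C k} \<inter> {\<omega> \<in> space M. X \<omega> \<inter> A k = {}}" for k
  have A: "A k \<in> sets (hyp_intensity n \<gamma>)" "emeasure (hyp_intensity n \<gamma>) (A k) < \<infinity>"
    "measure (hyp_intensity n \<gamma>) (A k) \<le> 2 * \<gamma> * (\<delta> * sph_pos_mean n + real n * \<epsilon>)" if "k \<in> K" for k
    unfolding A_def using hyp_intensity_hyps_below_plus[OF n \<gamma>, of "real n * \<epsilon>" "z k"] z[OF that] e by auto
  have "exp (- (2 * \<gamma> * (\<delta> * sph_pos_mean n + real n * \<epsilon>)))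
      = (\<Sum>k\<in>K. prob {\<omega> \<in> space M. Y \<omega> \<in> C k} * exp (- (2 * \<gamma> * (\<delta> * sph_pos_mean n + real n * \<epsilon>))))"
    using sum_prob_Y_in_partition[OF K C] by (simp flip: sum_distrib_right)
  also have "\<dots> \<le> (\<Sum>k\<in>K. prob (V k))"
    unfolding V_def using A C by (intro sum_mono) (auto simp: prob_Y_in_and_void intro!: mult_left_mono)
  also have "\<dots> = prob (\<Union>k\<in>K. V k)"
    using K A C unfolding V_def
    by (intro finite_measure_finite_Union[symmetric])
      (auto simp: disjoint_family_on_def intro!: prob_Y_in_and_void(1))
  also have "\<dots> \<le> prob {\<omega> \<in> space M. Y \<omega> \<in> zero_cell n (X \<omega>)}"
  proof (intro finite_measure_mono zero_cell_event UN_least)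
    show "V k \<subseteq> {\<omega> \<in> space M. Y \<omega> \<in> zero_cell n (X \<omega>)}" if "k \<in> K" for k
      unfolding V_def A_def using X_subset_space close z[OF that] C(1)[of k]
      by (auto intro!: in_zero_cell_if_no_hyps_below dest: sets.sets_into_space)
  qed
  finally show ?thesis .
qed

lemma prob_zero_cell_le:
  assumes e: "\<epsilon> > 0"
  shows "prob {\<omega> \<in> space M. Y \<omega> \<in> zero_cell n (X \<omega>)}
    \<le> exp (- (2 * \<gamma> * (\<delta> * sph_pos_mean n - real n * \<epsilon>)))"
proof -
  obtain K :: "(nat \<Rightarrow> int) set" and C z where K: "finite K" "disjoint_family_on C K"
      and C: "\<And>k. C k \<in> sets (lborel_n n)" "{y \<in> space (lborel_n n). norm_n n y = \<delta>} \<subseteq> (\<Union>k\<in>K. C k)"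
      and z: "\<And>k. k \<in> K \<Longrightarrow> z k \<in> C k \<and> norm_n n (z k) = \<delta>"
      and close: "\<And>k y y' i. y \<in> C k \<Longrightarrow> y' \<in> C k \<Longrightarrow> i < n \<Longrightarrow> \<bar>y i - y' i\<bar> \<le> \<epsilon>"
    using sphere_grid_partition[OF e, where n=n and \<delta>=\<delta>] by blast
  define S where "S = {\<omega> \<in> space M. Y \<omega> \<in> {y \<in> space (lborel_n n). norm_n n y = \<delta>}}"
  define A where "A k = hyps_below n (\<lambda>u. inner_n n (z k) u - real n * \<epsilon>)" for k
  define V where "V k = {\<omega> \<in> space M. Y \<omega> \<in> C k} \<inter> {\<omega> \<in> space M. X \<omega> \<inter> A k = {}}" for k
  have A: "A k \<in> sets (hyp_intensity n \<gamma>)" "emeasure (hyp_intensity n \<gamma>) (A k) < \<infinity>"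
    "2 * \<gamma> * (\<delta> * sph_pos_mean n - real n * \<epsilon>) \<le> measure (hyp_intensity n \<gamma>) (A k)" if "k \<in> K" for k
    unfolding A_def using hyp_intensity_hyps_below_minus[OF n \<gamma>, of "real n * \<epsilon>" "z k"] z[OF that] e by auto
  have S: "S \<in> events" "prob (space M - S) = 0"
    using Y_event[of "{y \<in> space (lborel_n n). norm_n n y = \<delta>}"] prob_compl
      prob_norm_n_eq_radius[OF n \<delta> Y_measurable Y_distr] unfolding S_def by auto
  have "{\<omega> \<in> space M. Y \<omega> \<in> zero_cell n (X \<omega>)} \<subseteq> (space M - S) \<union> (\<Union>k\<in>K. V k)"
  proof
    fix \<omega> assume \<omega>: "\<omega> \<in> {\<omega> \<in> space M. Y \<omega> \<in> zero_cell n (X \<omega>)}"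
    show "\<omega> \<in> (space M - S) \<union> (\<Union>k\<in>K. V k)"
    proof (cases "\<omega> \<in> S")
      case True
      then obtain k where "k \<in> K" "Y \<omega> \<in> C k" using C(2) unfolding S_def by auto
      then show ?thesis
        using \<omega> close z no_hyps_below_if_in_zero_cell[of "Y \<omega>" n "X \<omega>" "z k" \<epsilon>]
        unfolding V_def A_def by blast
    qed (use \<omega> in auto)
  qed
  then have "prob {\<omega> \<in> space M. Y \<omega> \<in> zero_cell n (X \<omega>)} \<le> prob ((space M - S) \<union> (\<Union>k\<in>K. V k))"
    using K A C S unfolding V_def
    by (intro finite_measure_mono sets.Un sets.finite_UN) (auto intro!: prob_Y_in_and_void(1))
  also have "\<dots> \<le> prob (space M - S) + (\<Sum>k\<in>K. prob (V k))"
    using K A C S unfolding V_def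
    by (intro order_trans[OF measure_Un_le] add_left_mono finite_measure_subadditive_finite
        sets.finite_UN) (auto intro!: prob_Y_in_and_void(1))
  also have "\<dots> \<le> (\<Sum>k\<in>K. prob {\<omega> \<in> space M. Y \<omega> \<in> C k} * exp (- (2 * \<gamma> * (\<delta> * sph_pos_mean n - real n * \<epsilon>))))"
    unfolding S(2) V_def using A C by (auto simp: prob_Y_in_and_void intro!: sum_mono mult_left_mono)
  also have "\<dots> = exp (- (2 * \<gamma> * (\<delta> * sph_pos_mean n - real n * \<epsilon>)))"
    using sum_prob_Y_in_partition[OF K C] by (simp flip: sum_distrib_right)
  finally show ?thesis .
qed

lemma prob_zero_cell: "prob {\<omega> \<in> space M. Y \<omega> \<in> zero_cell n (X \<omega>)} = exp (- (2 * \<gamma> * (\<delta> * sph_pos_mean n)))"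
proof -
  let ?P = "prob {\<omega> \<in> space M. Y \<omega> \<in> zero_cell n (X \<omega>)}"
  let ?f = "\<lambda>\<epsilon>. exp (- (2 * \<gamma> * (\<delta> * sph_pos_mean n + real n * \<epsilon>)))"
  let ?g = "\<lambda>\<epsilon>. exp (- (2 * \<gamma> * (\<delta> * sph_pos_mean n - real n * \<epsilon>)))"
  have lim: "(?f \<longlongrightarrow> ?f 0) (at_right 0)" "(?g \<longlongrightarrow> ?g 0) (at_right 0)"
    by (intro tendsto_intros)+
  have "\<forall>\<^sub>F \<epsilon> in at_right 0. ?f \<epsilon> \<le> ?P" "\<forall>\<^sub>F \<epsilon> in at_right 0. ?P \<le> ?g \<epsilon>"
    using eventually_at_right_less[of 0] by (auto elim!: eventually_mono intro: prob_zero_cell_ge prob_zero_cell_le)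
  then have "?f 0 \<le> ?P" "?P \<le> ?g 0"
    using tendsto_le[OF trivial_limit_at_right_real tendsto_const lim(1)]
      tendsto_le[OF trivial_limit_at_right_real lim(2) tendsto_const] by auto
  then show ?thesis by simp
qed

end

section \<open>Asymptotics\<close>

lemma tendsto_exp_neg_mult_powr:
  fixes a :: "nat \<Rightarrow> real"
  assumes a: "a \<longlonglongrightarrow> L" and L: "L > 0"
  shows "\<beta> > 0 \<Longrightarrow> (\<lambda>n. exp (- (a n * real n powr \<beta>))) \<longlonglongrightarrow> 0"
    and "\<beta> = 0 \<Longrightarrow> (\<lambda>n. exp (- (a n * real n powr \<beta>))) \<longlonglongrightarrow> exp (- L)"
    and "\<beta> < 0 \<Longrightarrow> (\<lambda>n. exp (- (a n * real n powr \<beta>))) \<longlonglongrightarrow> 1"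
proof -
  have n_top: "filterlim (\<lambda>n. real n) at_top sequentially"
    by (rule filterlim_real_sequentially)
  show "(\<lambda>n. exp (- (a n * real n powr \<beta>))) \<longlonglongrightarrow> 0" if "\<beta> > 0"
  proof -
    have "(\<lambda>n. real n powr (- \<beta>)) \<longlonglongrightarrow> 0"
      using that by (intro tendsto_neg_powr[OF _ n_top]) simp
    then have "filterlim (\<lambda>n. inverse (real n powr (- \<beta>))) at_top sequentially"
      by (rule filterlim_inverse_at_top) (simp add: eventually_gt_at_top eventually_mono)
    then have "filterlim (\<lambda>n. real n powr \<beta>) at_top sequentially"
      by (simp add: powr_minus)
    then have "filterlim (\<lambda>n. a n * real n powr \<beta>) at_top sequentially"
      by (rule filterlim_tendsto_pos_mult_at_top[OF a L])
    then show ?thesis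
      by (auto intro: filterlim_compose[OF exp_at_bot] simp: filterlim_uminus_at_top)
  qed
  show "(\<lambda>n. exp (- (a n * real n powr \<beta>))) \<longlonglongrightarrow> exp (- L)" if "\<beta> = 0"
  proof -
    have "(\<lambda>n. exp (- a n)) \<longlonglongrightarrow> exp (- L)"
      by (intro tendsto_intros a)
    moreover have "eventually (\<lambda>n. exp (- a n) = exp (- (a n * real n powr \<beta>))) sequentially"
      using eventually_gt_at_top[of 0] by eventually_elim (simp add: that)
    ultimately show ?thesis
      by (rule Lim_transform_eventually)
  qed
  show "(\<lambda>n. exp (- (a n * real n powr \<beta>))) \<longlonglongrightarrow> 1" if "\<beta> < 0"
  proof -
    have "(\<lambda>n. real n powr \<beta>) \<longlonglongrightarrow> 0"
      using that by (intro tendsto_neg_powr[OF _ n_top])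
    from tendsto_exp[OF tendsto_minus[OF tendsto_mult[OF a this]]] show ?thesis
      by simp
  qed
qed

lemma gamma_sph_pos_mean_tendsto:
  fixes \<gamma> :: "nat \<Rightarrow> real"
  assumes \<rho>: "\<rho> > 0" and asymp: "\<gamma> \<sim>[sequentially] (\<lambda>n. \<rho> * real n powr \<alpha>)"
  shows "(\<lambda>n. \<gamma> n * sph_pos_mean n / real n powr (\<alpha> - 1/2)) \<longlonglongrightarrow> \<rho> / sqrt (2 * pi)"
proof -
  have ratio: "(\<lambda>n. \<gamma> n / (\<rho> * real n powr \<alpha>)) \<longlonglongrightarrow> 1"
    using \<rho> by (intro asymp_equivD_strong[OF asymp] eventually_mono[OF eventually_gt_at_top[of 0]]) simp
  have "(\<lambda>n. \<rho> * (\<gamma> n / (\<rho> * real n powr \<alpha>)) * (sqrt (real n) * sph_pos_mean n))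
      \<longlonglongrightarrow> \<rho> * 1 * (1 / sqrt (2 * pi))"
    by (intro tendsto_intros ratio sqrt_n_sph_pos_mean_tendsto)
  moreover have "eventually (\<lambda>n. \<rho> * (\<gamma> n / (\<rho> * real n powr \<alpha>)) * (sqrt (real n) * sph_pos_mean n)
      = \<gamma> n * sph_pos_mean n / real n powr (\<alpha> - 1/2)) sequentially"
    using eventually_gt_at_top[of 0]
  proof eventually_elim
    case (elim n)
    then have "real n powr \<alpha> = sqrt (real n) * real n powr (\<alpha> - 1/2)"
      by (simp add: powr_half_sqrt[symmetric] powr_add[symmetric])
    then show ?case
      using elim \<rho> by (simp add: field_simps)
  qed
  ultimately show ?thesis
    by (auto elim: Lim_transform_eventually)
qed

theorem proposition3p4:
  fixes M :: "nat \<Rightarrow> 'w measure"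
    and X :: "nat \<Rightarrow> 'w \<Rightarrow> ((nat \<Rightarrow> real) \<times> real) set"
    and Y :: "nat \<Rightarrow> 'w \<Rightarrow> (nat \<Rightarrow> real)"
    and \<gamma> :: "nat \<Rightarrow> real" and \<rho> \<alpha> \<delta> :: real
  assumes "\<delta> > 0" and "\<rho> > 0"
    and "\<forall>n\<ge>1. \<gamma> n > 0"
    and "\<gamma> \<sim>[sequentially] (\<lambda>n. \<rho> * real n powr \<alpha>)"
    and "\<forall>n\<ge>1. poisson_process (M n) (X n) (hyp_intensity n (\<gamma> n))"
    and "\<forall>n\<ge>1. Y n \<in> measurable (M n) (lebesgue_n n)"
    and "\<forall>n\<ge>1. distr (M n) (lebesgue_n n) (Y n) = unif_sphere n \<delta>"
    and "\<forall>n\<ge>1. indep_of_process (M n) (X n) (hyp_intensity n (\<gamma> n)) (Y n) (lebesgue_n n)"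
    and "\<forall>n\<ge>1. {\<omega> \<in> space (M n). Y n \<omega> \<in> zero_cell n (X n \<omega>)} \<in> sets (M n)"
  shows "(\<alpha> > 1/2 \<longrightarrow>
           (\<lambda>n. measure (M n) {\<omega> \<in> space (M n). Y n \<omega> \<in> zero_cell n (X n \<omega>)})
             \<longlonglongrightarrow> 0)
       \<and> (\<alpha> = 1/2 \<longrightarrow>
           (\<lambda>n. measure (M n) {\<omega> \<in> space (M n). Y n \<omega> \<in> zero_cell n (X n \<omega>)})
             \<longlonglongrightarrow> exp (- sqrt (2 / pi) * \<rho> * \<delta>))
       \<and> (\<alpha> < 1/2 \<longrightarrow>
           (\<lambda>n. measure (M n) {\<omega> \<in> space (M n). Y n \<omega> \<in> zero_cell n (X n \<omega>)})
             \<longlonglongrightarrow> 1)"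
proof -
  define P where "P n = measure (M n) {\<omega> \<in> space (M n). Y n \<omega> \<in> zero_cell n (X n \<omega>)}" for n
  define a where "a n = 2 * \<delta> * (\<gamma> n * sph_pos_mean n / real n powr (\<alpha> - 1/2))" for n
  have "P n = exp (- (a n * real n powr (\<alpha> - 1/2)))" if "n \<ge> 1" for n
  proof -
    interpret zero_cell_model "M n" "X n" "Y n" n "\<gamma> n" \<delta>
      using assms that by unfold_locales auto
    show ?thesis
      using prob_zero_cell that unfolding P_def a_def by (simp add: field_simps)
  qed
  then have P: "eventually (\<lambda>n. exp (- (a n * real n powr (\<alpha> - 1/2))) = P n) sequentially"
    by (auto intro: eventually_mono[OF eventually_ge_at_top[of 1]])
  have "a \<longlonglongrightarrow> 2 * \<delta> * (\<rho> / sqrt (2 * pi))"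
    unfolding a_def using assms(2,4) by (intro tendsto_intros gamma_sph_pos_mean_tendsto)
  moreover have "2 * \<delta> * (\<rho> / sqrt (2 * pi)) = sqrt (2 / pi) * \<rho> * \<delta>"
    by (simp add: real_sqrt_divide real_sqrt_mult field_simps)
  ultimately have a: "a \<longlonglongrightarrow> sqrt (2 / pi) * \<rho> * \<delta>" and pos: "sqrt (2 / pi) * \<rho> * \<delta> > 0"
    using assms(1,2) by simp_all
  show ?thesis
    using tendsto_exp_neg_mult_powr[OF a pos, of "\<alpha> - 1/2"] Lim_transform_eventually[OF _ P]
    unfolding P_def by auto
qed

end
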